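(* Let $A$ be a finite-dimensional symmetric $k$-algebra, $\{S_i:i\in I\}$ representatives of the simple $A$-modules with projective covers $P_i$, and $I_0\subseteq I$. For $t\ge 0$ define complexes $T^{(t)}_i\in K^b(P_A)$ as follows. For $i\in I_0$, $T^{(t)}_i=P_i[t]$ (i.e. $P_i$ concentrated in degree $-t$). For $j\in I\setminus I_0$, $T^{(t)}_j$ is the complex $$0\to R_j^{(t-1)}\to R_j^{(t-2)}\to\cdots\to R_j^{(0)}\to P_j\to 0$$ with $P_j$ in degree $0$ and $R_j^{(m)}$ in degree $-(m+1)$, where, setting $R_j^{(-1)}=P_j$ and $K_j^{(0)}=P_j$, and for $m\ge1$ $K_j^{(m)}=\ker\big(R_j^{(m-1)}\to R_j^{(m-2)}\big)$, the module $R_j^{(m)}$ is the projective cover of the largest submodule $U$ of $K_j^{(m)}$ all of whose simple quotients are isomorphic to some $S_l$ with $l\in I_0$, and the differential $R_j^{(m)}\to R_j^{(m-1)}$ is the composite $R_j^{(m)}\to U\hookrightarrow K_j^{(m)}\hookrightarrow R_j^{(m-1)}$. For $i\in I$ let $T^{(t)}=\bigoplus_{i\in I}T^{(t)}_i$, and let $c^{(t)}_{ij}=\dim_k\operatorname{Hom}_{K^b(P_A)}(T^{(t)}_i,T^{(t)}_j)$ (the Cartan invariants of $B^{(t)}=\operatorname{End}_{K^b(P_A)}(T^{(t)})$, which is derived equivalent to $A$). Then for every $i\in I_0$, $j\in I\setminus I_0$ and $t\ge 0$, $$c^{(t)}_{ij}+c^{(t+1)}_{ij}=\dim_k\operatorn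ame{Hom}_A\big(P_i,R_j^{(t)}\big).$$
   Context: Modules are finitely generated right modules; $P_A$ is the category of finitely generated projective $A$-modules, $K^b(P_A)$ its bounded homotopy category, complexes indexed cohomologically with $(X[1])^n=X^{n+1}$. Each $T^{(t)}$ is a tilting complex for $A$ (obtained by iterating the two-term tilting construction with the same subset $I_0$). *)

theory Defs
  imports Main
begin

text \<open>Matrices over 'k are functions nat => nat => 'k; a matrix of size r x c is
  one vanishing outside {..<r} x {..<c}.  Vectors are row vectors nat => 'k, and
  maps act on the right (v |-> v F), so composition "first F then G" is F G.\<close>

type_synonym 'k mat = "nat \<Rightarrow> nat \<Rightarrow> 'k"

definition zmat :: "'k::zero mat" where "zmat = (\<lambda>_ _. 0)"

definition wf_mat :: "nat \<Rightarrow> nat \<Rightarrow> 'k::zero mat \<Rightarrow> bool" where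
  "wf_mat r c F = (\<forall>i j. (r \<le> i \<or> c \<le> j) \<longrightarrow> F i j = 0)"

definition mmul :: "nat \<Rightarrow> 'k::comm_semiring_1 mat \<Rightarrow> 'k mat \<Rightarrow> 'k mat" where
  "mmul n F G = (\<lambda>i j. \<Sum>l<n. F i l * G l j)"

definition madd :: "'k::plus mat \<Rightarrow> 'k mat \<Rightarrow> 'k mat" where
  "madd F G = (\<lambda>i j. F i j + G i j)"

definition idm :: "nat \<Rightarrow> 'k::zero_neq_one mat" where
  "idm n = (\<lambda>i j. if i = j \<and> i < n then 1 else 0)"

definition vsupp :: "nat \<Rightarrow> (nat \<Rightarrow> 'k::zero) \<Rightarrow> bool" where
  "vsupp n v = (\<forall>i. n \<le> i \<longrightarrow> v i = 0)"

definition vmul :: "nat \<Rightarrow> (nat \<Rightarrow> 'k::comm_semiring_1) \<Rightarrow> 'k mat \<Rightarrow> (nat \<Rightarrow> 'k)" where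
  "vmul n v F = (\<lambda>j. \<Sum>i<n. v i * F i j)"

definition inj_mat :: "nat \<Rightarrow> 'k::comm_semiring_1 mat \<Rightarrow> bool" where
  "inj_mat r F = (\<forall>v. vsupp r v \<longrightarrow> vmul r v F = (\<lambda>_. 0) \<longrightarrow> v = (\<lambda>_. 0))"

definition surj_mat :: "nat \<Rightarrow> nat \<Rightarrow> 'k::comm_semiring_1 mat \<Rightarrow> bool" where
  "surj_mat r c F = (\<forall>w. vsupp c w \<longrightarrow> (\<exists>v. vsupp r v \<and> vmul r v F = w))"

text \<open>A finite-dimensional k-algebra A with basis e_0,...,e_(d-1), given by structure
  constants: e_p e_q = sum_r amul p q r e_r, and 1 = sum_p aone p e_p.\<close>

record 'k alg =
  adim :: nat
  amul :: "nat \<Rightarrow> nat \<Rightarrow> nat \<Rightarrow> 'k"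
  aone :: "nat \<Rightarrow> 'k"

definition fd_algebra :: "'k::field alg \<Rightarrow> bool" where
  "fd_algebra A = (let d = adim A in
     (\<forall>p<d. \<forall>q<d. \<forall>s<d. \<forall>u<d.
        (\<Sum>r<d. amul A p q r * amul A r s u) = (\<Sum>r<d. amul A q s r * amul A p r u)) \<and>
     (\<forall>q<d. \<forall>r<d. (\<Sum>p<d. aone A p * amul A p q r) = (if q = r then 1 else 0)) \<and>
     (\<forall>q<d. \<forall>r<d. (\<Sum>p<d. aone A p * amul A q p r) = (if q = r then 1 else 0)))"

text \<open>Symmetric algebra: there is a linear form lam on A with lam(ab) = lam(ba)
  whose associated bilinear form (a,b) |-> lam(ab) is nondegenerate.\<close>

definition symmetric_algebra :: "'k::field alg \<Rightarrow> bool" where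
  "symmetric_algebra A = (fd_algebra A \<and> (let d = adim A in
     (\<exists>lam :: nat \<Rightarrow> 'k.
        (\<forall>p<d. \<forall>q<d. (\<Sum>r<d. amul A p q r * lam r) = (\<Sum>r<d. amul A q p r * lam r)) \<and>
        (\<forall>c :: nat \<Rightarrow> 'k. (\<forall>q<d. (\<Sum>p<d. c p * (\<Sum>r<d. amul A p q r * lam r)) = 0)
            \<longrightarrow> (\<forall>p<d. c p = 0)))))"

text \<open>A finitely generated (= finite-dimensional) right A-module: a k-space k^n
  (row vectors) with e_p acting by right multiplication by the n x n matrix mact p.\<close>

record 'k amod =
  mdim :: nat
  mact :: "nat \<Rightarrow> 'k mat"

definition is_module :: "'k::field alg \<Rightarrow> 'k amod \<Rightarrow> bool" where
  "is_module A M = (let d = adim A; n = mdim M in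
     (\<forall>p<d. wf_mat n n (mact M p)) \<and>
     (\<forall>p<d. \<forall>q<d. mmul n (mact M p) (mact M q) = (\<lambda>i j. \<Sum>r<d. amul A p q r * mact M r i j)) \<and>
     (\<lambda>i j. \<Sum>p<d. aone A p * mact M p i j) = idm n)"

definition zmod :: "'k::zero amod" where
  "zmod = \<lparr>mdim = 0, mact = (\<lambda>_ _ _. 0)\<rparr>"

definition is_hom :: "'k::field alg \<Rightarrow> 'k amod \<Rightarrow> 'k amod \<Rightarrow> 'k mat \<Rightarrow> bool" where
  "is_hom A M N F = (wf_mat (mdim M) (mdim N) F \<and>
     (\<forall>p<adim A. mmul (mdim M) (mact M p) F = mmul (mdim N) F (mact N p)))"

definition is_mono :: "'k::field alg \<Rightarrow> 'k amod \<Rightarrow> 'k amod \<Rightarrow> 'k mat \<Rightarrow> bool" where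
  "is_mono A M N F = (is_hom A M N F \<and> inj_mat (mdim M) F)"

definition is_epi :: "'k::field alg \<Rightarrow> 'k amod \<Rightarrow> 'k amod \<Rightarrow> 'k mat \<Rightarrow> bool" where
  "is_epi A M N F = (is_hom A M N F \<and> surj_mat (mdim M) (mdim N) F)"

definition isomorphic :: "'k::field alg \<Rightarrow> 'k amod \<Rightarrow> 'k amod \<Rightarrow> bool" where
  "isomorphic A M N = (\<exists>F. is_mono A M N F \<and> is_epi A M N F)"

text \<open>Simple: nonzero and every submodule (image of a monomorphism) is 0 or everything.\<close>

definition simple_mod :: "'k::field alg \<Rightarrow> 'k amod \<Rightarrow> bool" where
  "simple_mod A M = (is_module A M \<and> 0 < mdim M \<and>
     (\<forall>N F. is_module A N \<and> is_mono A N M F \<longrightarrow> mdim N = 0 \<or> mdim N = mdim M))"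

definition simple_reps :: "'k::field alg \<Rightarrow> 'i set \<Rightarrow> ('i \<Rightarrow> 'k amod) \<Rightarrow> bool" where
  "simple_reps A I S = ((\<forall>i\<in>I. simple_mod A (S i)) \<and>
     (\<forall>i\<in>I. \<forall>i'\<in>I. isomorphic A (S i) (S i') \<longrightarrow> i = i') \<and>
     (\<forall>M. simple_mod A M \<longrightarrow> (\<exists>i\<in>I. isomorphic A M (S i))))"

definition projective_mod :: "'k::field alg \<Rightarrow> 'k amod \<Rightarrow> bool" where
  "projective_mod A P = (is_module A P \<and>
     (\<forall>M N g f. is_module A M \<and> is_module A N \<and> is_epi A M N g \<and> is_hom A P N f
        \<longrightarrow> (\<exists>h. is_hom A P M h \<and> mmul (mdim M) h g = f)))"

text \<open>Projective cover: a projective P with an essential epimorphism P -> M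
  (superfluous kernel: any map into P whose composite with the epi is onto is onto).\<close>

definition proj_cover :: "'k::field alg \<Rightarrow> 'k amod \<Rightarrow> 'k amod \<Rightarrow> 'k mat \<Rightarrow> bool" where
  "proj_cover A P M e = (projective_mod A P \<and> is_module A M \<and> is_epi A P M e \<and>
     (\<forall>Q h. is_module A Q \<and> is_hom A Q P h \<and> surj_mat (mdim Q) (mdim M) (mmul (mdim P) h e)
        \<longrightarrow> surj_mat (mdim Q) (mdim P) h))"

definition top_in :: "'k::field alg \<Rightarrow> ('i \<Rightarrow> 'k amod) \<Rightarrow> 'i set \<Rightarrow> 'k amod \<Rightarrow> bool" where
  "top_in A S I0 U = (\<forall>M F. simple_mod A M \<and> is_epi A U M F \<longrightarrow> (\<exists>l\<in>I0. isomorphic A M (S l)))"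

definition largest_sub :: "'k::field alg \<Rightarrow> ('i \<Rightarrow> 'k amod) \<Rightarrow> 'i set \<Rightarrow> 'k amod \<Rightarrow> 'k amod \<Rightarrow> 'k mat \<Rightarrow> bool" where
  "largest_sub A S I0 K U \<iota> = (is_module A U \<and> is_mono A U K \<iota> \<and> top_in A S I0 U \<and>
     (\<forall>V \<kappa>. is_module A V \<and> is_mono A V K \<kappa> \<and> top_in A S I0 V
        \<longrightarrow> (\<exists>g. is_hom A V U g \<and> mmul (mdim U) g \<iota> = \<kappa>)))"

definition is_kernel :: "'k::field alg \<Rightarrow> 'k amod \<Rightarrow> 'k amod \<Rightarrow> 'k mat \<Rightarrow> 'k amod \<Rightarrow> 'k mat \<Rightarrow> bool" where
  "is_kernel A M N f K \<kappa> = (is_module A K \<and> is_mono A K M \<kappa> \<and> mmul (mdim M) \<kappa> f = zmat \<and>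
     (\<forall>v. vsupp (mdim M) v \<and> vmul (mdim M) v f = (\<lambda>_. 0)
        \<longrightarrow> (\<exists>u. vsupp (mdim K) u \<and> vmul (mdim K) u \<kappa> = v)))"

text \<open>Index shift: R m is R_j^(m) for m >= 0 (R_j^(-1) = P_j is handled separately),
  dR m : R_j^(m) -> R_j^(m-1) is the differential, K m = K_j^(m) with inclusion
  kappa m : K_j^(m) -> R_j^(m-1), U m the largest submodule of K_j^(m) with top in
  add(S_l, l in I0) with inclusion iota m, and pi m : R_j^(m) -> U m a projective cover.\<close>

definition R_tower ::
  "'k::field alg \<Rightarrow> ('i \<Rightarrow> 'k amod) \<Rightarrow> 'i set \<Rightarrow> 'k amod \<Rightarrow>
   (nat \<Rightarrow> 'k amod) \<Rightarrow> (nat \<Rightarrow> 'k mat) \<Rightarrow> (nat \<Rightarrow> 'k amod) \<Rightarrow> (nat \<Rightarrow> 'k mat) \<Rightarrow>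
   (nat \<Rightarrow> 'k amod) \<Rightarrow> (nat \<Rightarrow> 'k mat) \<Rightarrow> (nat \<Rightarrow> 'k mat) \<Rightarrow> bool" where
  "R_tower A S I0 Pj R dR K \<kappa> U \<iota> \<pi> =
     (let prev = (\<lambda>m. if m = 0 then Pj else R (m - 1)) in
      \<forall>m. (if m = 0 then K 0 = Pj \<and> \<kappa> 0 = idm (mdim Pj)
           else is_kernel A (R (m - 1)) (prev (m - 1)) (dR (m - 1)) (K m) (\<kappa> m)) \<and>
          largest_sub A S I0 (K m) (U m) (\<iota> m) \<and>
          proj_cover A (R m) (U m) (\<pi> m) \<and>
          dR m = mmul (mdim (U m)) (\<pi> m) (mmul (mdim (K m)) (\<iota> m) (\<kappa> m)))"

text \<open>A complex is a pair (C, dC) with C n the module in (cohomological) degree n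
  and dC n : C n -> C (n+1).\<close>

definition chain_map :: "'k::field alg \<Rightarrow> (int \<Rightarrow> 'k amod) \<Rightarrow> (int \<Rightarrow> 'k mat) \<Rightarrow>
    (int \<Rightarrow> 'k amod) \<Rightarrow> (int \<Rightarrow> 'k mat) \<Rightarrow> (int \<Rightarrow> 'k mat) \<Rightarrow> bool" where
  "chain_map A C dC E dE f = ((\<forall>n. is_hom A (C n) (E n) (f n)) \<and>
     (\<forall>n. mmul (mdim (C (n + 1))) (dC n) (f (n + 1)) = mmul (mdim (E n)) (f n) (dE n)))"

definition null_homotopic :: "'k::field alg \<Rightarrow> (int \<Rightarrow> 'k amod) \<Rightarrow> (int \<Rightarrow> 'k mat) \<Rightarrow>
    (int \<Rightarrow> 'k amod) \<Rightarrow> (int \<Rightarrow> 'k mat) \<Rightarrow> (int \<Rightarrow> 'k mat) \<Rightarrow> bool" where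
  "null_homotopic A C dC E dE f = (\<exists>h. (\<forall>n. is_hom A (C n) (E (n - 1)) (h n)) \<and>
     (\<forall>n. f n = madd (mmul (mdim (C (n + 1))) (dC n) (h (n + 1)))
                      (mmul (mdim (E (n - 1))) (h n) (dE (n - 1)))))"

text \<open>dim_k Hom_{K^b(P_A)}(C, E): the maximal number of chain maps that are linearly
  independent modulo null-homotopic maps.\<close>

definition dim_HomK :: "'k::field alg \<Rightarrow> (int \<Rightarrow> 'k amod) \<Rightarrow> (int \<Rightarrow> 'k mat) \<Rightarrow>
    (int \<Rightarrow> 'k amod) \<Rightarrow> (int \<Rightarrow> 'k mat) \<Rightarrow> nat" where
  "dim_HomK A C dC E dE = Max {length fs | fs.
     (\<forall>f\<in>set fs. chain_map A C dC E dE f) \<and>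
     (\<forall>c :: nat \<Rightarrow> 'k. null_homotopic A C dC E dE (\<lambda>n i j. \<Sum>l<length fs. c l * (fs ! l) n i j)
        \<longrightarrow> (\<forall>l<length fs. c l = 0))}"

definition dim_Hom :: "'k::field alg \<Rightarrow> 'k amod \<Rightarrow> 'k amod \<Rightarrow> nat" where
  "dim_Hom A M N = Max {length Fs | Fs.
     (\<forall>F\<in>set Fs. is_hom A M N F) \<and>
     (\<forall>c :: nat \<Rightarrow> 'k. (\<lambda>i j. \<Sum>l<length Fs. c l * (Fs ! l) i j) = zmat
        \<longrightarrow> (\<forall>l<length Fs. c l = 0))}"

definition T_mods_I0 :: "('i \<Rightarrow> 'k::zero amod) \<Rightarrow> 'i \<Rightarrow> nat \<Rightarrow> int \<Rightarrow> 'k amod" where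
  "T_mods_I0 P i t = (\<lambda>n. if n = - int t then P i else zmod)"

definition T_diff_I0 :: "nat \<Rightarrow> int \<Rightarrow> 'k::zero mat" where
  "T_diff_I0 t = (\<lambda>n. zmat)"

definition T_mods_j :: "'k::zero amod \<Rightarrow> (nat \<Rightarrow> 'k amod) \<Rightarrow> nat \<Rightarrow> int \<Rightarrow> 'k amod" where
  "T_mods_j Pj R t = (\<lambda>n. if n = 0 then Pj
                         else if - int t \<le> n \<and> n < 0 then R (nat (- n - 1)) else zmod)"

definition T_diff_j :: "(nat \<Rightarrow> 'k::zero mat) \<Rightarrow> nat \<Rightarrow> int \<Rightarrow> 'k mat" where
  "T_diff_j dR t = (\<lambda>n. if - int t \<le> n \<and> n < 0 then dR (nat (- n - 1)) else zmat)"

end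

theory Submission
  imports Defs "HOL-Library.Function_Algebras" "HOL.Vector_Spaces"
begin

text \<open>Since T^(t)_i = P_i[t] has zero differential and T^(t)_j vanishes in degree -t-1, no nonzero
  chain map P_i[t] \<rightarrow> T^(t)_j is null-homotopic, so c^(t)_ij is the dimension of the space of maps
  g : P_i \<rightarrow> R_j^(t-1) with g d = 0 (where R_j^(-1) = P_j). Composition with d : R_j^(t) \<rightarrow> R_j^(t-1)
  maps Hom_A(P_i, R_j^(t)) onto this space, with kernel the corresponding space for t+1: such a g
  factors through K_j^(t), then through U because every simple quotient of the image of P_i is
  isomorphic to S_i with i in I_0, and finally lifts along the projective cover R_j^(t) \<rightarrow> U by
  projectivity of P_i. Rank-nullity gives the identity.\<close>

section \<open>Linearly independent lists and dimension\<close>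

lemma sum_fun_apply: "(sum f A) x = (\<Sum>a\<in>A. f a x)"
  by (induct A rule: infinite_finite_induct) auto

lemma sum_nth_eq_sum_set:
  assumes "distinct xs"
  shows "(\<Sum>l<length xs. f (xs!l)) = (\<Sum>x\<in>set xs. f x)"
  using assms by (simp add: sum_list_distinct_conv_sum_set[symmetric] sum_list_sum_nth atLeast0LessThan)

context vector_space begin

definition independent_list :: "'b list \<Rightarrow> bool" where
  "independent_list xs \<longleftrightarrow> (\<forall>c. (\<Sum>l<length xs. c l *s xs!l) = 0 \<longrightarrow> (\<forall>l<length xs. c l = 0))"

lemma independent_list_iff: "independent_list xs \<longleftrightarrow> distinct xs \<and> independent (set xs)"
proof
  assume indep: "independent_list xs"
  show "distinct xs \<and> independent (set xs)"
  proof
    show dist: "distinct xs"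
    proof (rule ccontr)
      assume "\<not> distinct xs"
      then obtain a b where ab: "a < length xs" "b < length xs" "a \<noteq> b" "xs!a = xs!b"
        by (auto simp: distinct_conv_nth)
      define c where "c = (\<lambda>l. if l = a then (1::'a) else if l = b then -1 else 0)"
      have "(\<Sum>l<length xs. c l *s xs!l) = (\<Sum>l\<in>{a,b}. c l *s xs!l)"
        by (rule sum.mono_neutral_right) (use ab in \<open>auto simp: c_def\<close>)
      also have "\<dots> = 0" using ab by (simp add: c_def)
      finally have "c a = 0" using indep ab unfolding independent_list_def by blast
      then show False by (simp add: c_def)
    qed
    show "independent (set xs)"
    proof (rule independent_if_scalars_zero)
      fix f x assume h: "(\<Sum>x\<in>set xs. f x *s x) = 0" "x \<in> set xs"
      have "(\<Sum>l<length xs. f (xs!l) *s xs!l) = 0"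
        using h(1) sum_nth_eq_sum_set[OF dist, of "\<lambda>x. f x *s x"] by simp
      then have "\<forall>l<length xs. f (xs!l) = 0"
        using spec[OF indep[unfolded independent_list_def], of "\<lambda>l. f (xs!l)"] by simp
      then show "f x = 0" using h(2) by (auto simp: in_set_conv_nth)
    qed simp
  qed
next
  assume "distinct xs \<and> independent (set xs)"
  then have dist: "distinct xs" and indep: "independent (set xs)" by auto
  have inj: "inj_on ((!) xs) {..<length xs}" using dist by (simp add: inj_on_nth)
  show "independent_list xs"
    unfolding independent_list_def
  proof (intro allI impI)
    fix c l assume h: "(\<Sum>l<length xs. c l *s xs!l) = 0" and l: "l < length xs"
    define f where "f = (\<lambda>x. c (inv_into {..<length xs} ((!) xs) x))"
    have fx: "f (xs!k) = c k" if "k < length xs" for k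
      using inv_into_f_f[OF inj] that by (simp add: f_def)
    have "(\<Sum>x\<in>set xs. f x *s x) = (\<Sum>k<length xs. c k *s xs!k)"
      using sum_nth_eq_sum_set[OF dist, of "\<lambda>x. f x *s x"] by (simp add: fx)
    then have "f (xs!l) = 0" using independentD[OF indep finite_set order_refl] h l by simp
    then show "c l = 0" using fx l by simp
  qed
qed

lemma span_set_eq_lincombs:
  assumes "distinct xs"
  shows "span (set xs) = {(\<Sum>l<length xs. c l *s xs!l) | c. True}"
proof -
  have inj: "inj_on ((!) xs) {..<length xs}" using assms by (simp add: inj_on_nth)
  have "(\<Sum>v\<in>set xs. u v *s v) = (\<Sum>l<length xs. u (xs!l) *s xs!l)" for u
    using sum_nth_eq_sum_set[OF assms, of "\<lambda>v. u v *s v"] by simp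
  moreover have "(\<Sum>l<length xs. c l *s xs!l)
      = (\<Sum>l<length xs. (c \<circ> inv_into {..<length xs} ((!) xs)) (xs!l) *s xs!l)" for c
    using inv_into_f_f[OF inj] by (intro sum.cong) auto
  ultimately show ?thesis
    unfolding span_finite[OF finite_set] by (auto simp del: o_apply)
qed

lemma Max_length_independent_list_eq_dim:
  assumes "finite T" and "X \<subseteq> span T"
  shows "Max {length xs | xs. set xs \<subseteq> X \<and> independent_list xs} = dim X"
proof -
  let ?L = "{length xs | xs. set xs \<subseteq> X \<and> independent_list xs}"
  obtain B where B: "B \<subseteq> X" "independent B" "X \<subseteq> span B" "card B = dim X"
    using basis_exists by blast
  have "finite B" using independent_span_bound[OF assms(1) B(2)] B(1) assms(2) by blast
  then obtain bs where bs: "set bs = B" "distinct bs" using finite_distinct_list by blast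
  have "dim X \<in> ?L"
    using bs B by (auto simp: independent_list_iff distinct_card[symmetric] intro!: exI[of _ bs])
  moreover have "n \<le> dim X" if "n \<in> ?L" for n
  proof -
    from that obtain xs where xs: "n = length xs" "set xs \<subseteq> X" "independent_list xs" by blast
    then have "card (set xs) \<le> card B"
      using B(3) independent_span_bound[OF \<open>finite B\<close>] by (auto simp: independent_list_iff)
    then show ?thesis using xs B(4) by (simp add: distinct_card independent_list_iff)
  qed
  moreover have "finite ?L" by (rule finite_subset[of _ "{..dim X}"]) (use calculation in auto)
  ultimately show ?thesis by (intro Max_eqI) auto
qed

lemma finite_subset_span_of_larger_independent:
  assumes "finite T" and "independent B" and "B \<subseteq> span T" and "card T \<le> card B"
  shows "T \<subseteq> span B"
proof
  fix x assume x: "x \<in> T"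
  show "x \<in> span B"
  proof (rule ccontr)
    assume nx: "x \<notin> span B"
    have "independent (insert x B)" by (rule independent_insertI[OF nx assms(2)])
    moreover have "insert x B \<subseteq> span T" using assms(3) x span_base by blast
    ultimately have "card (insert x B) \<le> card T"
      using independent_span_bound[OF assms(1)] by blast
    moreover have "finite B" using independent_span_bound[OF assms(1-3)] by blast
    moreover have "x \<notin> B" using nx span_base by blast
    ultimately show False using assms(4) by simp
  qed
qed

lemma dim_eq_dim_kernel_add_dim_image:
  assumes lin: "Vector_Spaces.linear scale scale \<Phi>" and X: "subspace X"
    and "finite T" and "X \<subseteq> span T" and "finite T'" and "\<Phi> ` X \<subseteq> span T'"
  shows "dim X = dim {x\<in>X. \<Phi> x = 0} + dim (\<Phi> ` X)"
proof -
  interpret lin: Vector_Spaces.linear scale scale \<Phi> by (rule lin)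
  define Z where "Z = {x\<in>X. \<Phi> x = 0}"
  obtain BZ where BZ: "BZ \<subseteq> Z" "independent BZ" "Z \<subseteq> span BZ" "card BZ = dim Z"
    using basis_exists by blast
  obtain BY where BY: "BY \<subseteq> \<Phi> ` X" "independent BY" "\<Phi> ` X \<subseteq> span BY" "card BY = dim (\<Phi> ` X)"
    using basis_exists by blast
  have finBZ: "finite BZ" using independent_span_bound[OF assms(3) BZ(2)] BZ(1) assms(4) Z_def by blast
  have finBY: "finite BY" using independent_span_bound[OF assms(5) BY(2)] BY(1) assms(6) by blast
  have "\<forall>y\<in>BY. \<exists>x. x \<in> X \<and> \<Phi> x = y" using BY(1) by blast
  from bchoice[OF this] obtain L where L: "\<And>y. y \<in> BY \<Longrightarrow> L y \<in> X \<and> \<Phi> (L y) = y"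
    by blast
  have injL: "inj_on L BY" by (rule inj_on_inverseI[of _ \<Phi>]) (use L in auto)
  have disj: "BZ \<inter> L ` BY = {}"
  proof -
    have "L y \<notin> Z" if "y \<in> BY" for y
      using L[OF that] that BY(2) dependent_zero Z_def by auto
    then show ?thesis using BZ(1) by blast
  qed
  have \<Phi>_BZ: "\<Phi> (\<Sum>x\<in>BZ. f x *s x) = 0" for f
    using BZ(1) Z_def by (auto simp: lin.sum lin.scale intro!: sum.neutral)
  have \<Phi>_lift: "\<Phi> (\<Sum>y\<in>BY. u y *s L y) = (\<Sum>y\<in>BY. u y *s y)" for u
    using L by (simp add: lin.sum lin.scale)
  txt \<open>A basis of X: one of the kernel together with lifts of one of the image.\<close>
  define C where "C = BZ \<union> L ` BY"
  have split: "(\<Sum>x\<in>C. f x *s x) = (\<Sum>x\<in>BZ. f x *s x) + (\<Sum>y\<in>BY. f (L y) *s L y)" for f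
    unfolding C_def using finBZ finBY disj by (simp add: sum.union_disjoint sum.reindex[OF injL])
  have indC: "independent C"
  proof (rule independent_if_scalars_zero)
    fix f x assume h: "(\<Sum>x\<in>C. f x *s x) = 0" "x \<in> C"
    have "(\<Sum>y\<in>BY. f (L y) *s y) = 0"
      using arg_cong[OF h(1), of \<Phi>] by (simp add: split lin.add \<Phi>_BZ \<Phi>_lift lin.zero)
    then have fY: "\<forall>y\<in>BY. f (L y) = 0"
      using independentD[OF BY(2) finBY order_refl, of "\<lambda>y. f (L y)"] by blast
    then have "(\<Sum>x\<in>BZ. f x *s x) = 0" using h(1) split by simp
    then have "\<forall>z\<in>BZ. f z = 0" using independentD[OF BZ(2) finBZ order_refl, of f] by blast
    then show "f x = 0" using fY h(2) C_def by auto
  qed (simp add: C_def finBZ finBY)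
  have XC: "X \<subseteq> span C"
  proof
    fix x assume x: "x \<in> X"
    obtain u where u: "\<Phi> x = (\<Sum>y\<in>BY. u y *s y)"
      using x BY(3) span_finite[OF finBY] by auto
    define x' where "x' = (\<Sum>y\<in>BY. u y *s L y)"
    have "x' \<in> X" unfolding x'_def using L by (auto intro!: subspace_sum[OF X] subspace_scale[OF X])
    moreover have "\<Phi> (x - x') = 0" by (simp add: lin.diff x'_def \<Phi>_lift u)
    ultimately have "x - x' \<in> span C"
      using x subspace_diff[OF X] BZ(3) span_mono[of BZ C] by (auto simp: Z_def C_def)
    moreover have "x' \<in> span C" unfolding x'_def
      by (intro span_sum span_scale span_base) (auto simp: C_def)
    ultimately have "(x - x') + x' \<in> span C" by (rule span_add)
    then show "x \<in> span C" by simp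
  qed
  have "C \<subseteq> X" using BZ(1) Z_def L C_def by auto
  moreover have "card C = card BZ + card BY"
    unfolding C_def using finBZ finBY disj by (simp add: card_Un_disjoint card_image[OF injL])
  ultimately show ?thesis using dim_unique[OF _ XC indC refl] BZ(4) BY(4) Z_def by simp
qed

end

definition vscale :: "'k::field \<Rightarrow> ('a \<Rightarrow> 'k) \<Rightarrow> ('a \<Rightarrow> 'k)" where
  "vscale c v = (\<lambda>i. c * v i)"

definition mscale :: "'k::field \<Rightarrow> ('a \<Rightarrow> 'b \<Rightarrow> 'k) \<Rightarrow> ('a \<Rightarrow> 'b \<Rightarrow> 'k)" where
  "mscale c F = (\<lambda>i j. c * F i j)"

text \<open>Dimensions are measured in the spaces of all functions nat \<Rightarrow> 'k (row vectors) and
  nat \<Rightarrow> nat \<Rightarrow> 'k (matrices); the data of interest is finitely supported (vsupp, wf_mat).\<close>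

interpretation vec: vector_space vscale
  by unfold_locales (simp_all add: vscale_def fun_eq_iff algebra_simps)

interpretation mat: vector_space mscale
  by unfold_locales (simp_all add: mscale_def fun_eq_iff algebra_simps)

definition unitv :: "nat \<Rightarrow> nat \<Rightarrow> 'k::zero_neq_one" where
  "unitv a = (\<lambda>i. if i = a then 1 else 0)"

definition row_image :: "nat \<Rightarrow> 'k::comm_semiring_1 mat \<Rightarrow> (nat \<Rightarrow> 'k) set" where
  "row_image n F = {vmul n x F | x. vsupp n x}"

definition row_kernel :: "nat \<Rightarrow> 'k::comm_semiring_1 mat \<Rightarrow> (nat \<Rightarrow> 'k) set" where
  "row_kernel n F = {x. vsupp n x \<and> vmul n x F = (\<lambda>_. 0)}"

lemma mem_row_image_iff: "y \<in> row_image n F \<longleftrightarrow> (\<exists>x. vsupp n x \<and> vmul n x F = y)"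
  by (auto simp: row_image_def)

lemma row_image_0: "row_image 0 F = {\<lambda>_. 0}"
  by (force simp: row_image_def vsupp_def vmul_def)

lemma surj_mat_iff_row_image: "surj_mat r c F \<longleftrightarrow> {v. vsupp c v} \<subseteq> row_image r F"
  by (auto simp: surj_mat_def mem_row_image_iff)

lemma zero_fun_eq_zmat: "(0 :: nat \<Rightarrow> nat \<Rightarrow> 'k::zero) = zmat"
  by (simp add: zmat_def zero_fun_def)

lemma vmul_mmul: "vmul m (vmul r v F) G = vmul r v (mmul m F (G::'k::comm_semiring_1 mat))"
  unfolding vmul_def mmul_def
  by (rule ext) (simp add: sum_distrib_left sum_distrib_right mult.assoc, rule sum.swap)

lemma mmul_assoc: "mmul n (mmul m F G) H = mmul m F (mmul n G (H::'k::comm_semiring_1 mat))"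
  unfolding mmul_def
  by (rule ext, rule ext) (simp add: sum_distrib_left sum_distrib_right mult.assoc, rule sum.swap)

lemma mmul_row: "mmul m F G a = vmul m (F a) G"
  by (simp add: mmul_def vmul_def)

lemma wf_mmul: "wf_mat r c' F \<Longrightarrow> wf_mat r' c G \<Longrightarrow> wf_mat r c (mmul m F G)"
  by (auto simp: wf_mat_def mmul_def)

lemma wf_lincomb:
  "(\<And>s. s \<in> S \<Longrightarrow> wf_mat r c (G s)) \<Longrightarrow> wf_mat r c (\<lambda>i j. \<Sum>s\<in>S. a s * (G s i j::'k::comm_semiring_1))"
  by (simp add: wf_mat_def)

lemma wf_mat_row_vsupp: "wf_mat r c F \<Longrightarrow> vsupp c (F a)"
  by (auto simp: wf_mat_def vsupp_def)

lemma vsupp_vmul: "wf_mat r c F \<Longrightarrow> vsupp c (vmul r v F)"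
  by (auto simp: wf_mat_def vsupp_def vmul_def)

lemma vmul_unitv: "a < r \<Longrightarrow> vmul r (unitv a) F = F a"
  unfolding vmul_def unitv_def by (simp add: if_distrib[of "\<lambda>x. x * _"] cong: if_cong)

lemma vsupp_unitv: "a < r \<Longrightarrow> vsupp r (unitv a)"
  by (simp add: vsupp_def unitv_def)

lemma vmul_diff: "vmul r (\<lambda>i. x i - y i) (F::'k::comm_ring_1 mat) = (\<lambda>j. vmul r x F j - vmul r y F j)"
  by (simp add: vmul_def left_diff_distrib sum_subtractf)

lemma vmul_add: "vmul r (\<lambda>i. x i + y i) F = (\<lambda>j. vmul r x F j + vmul r y F j)"
  by (simp add: vmul_def algebra_simps sum.distrib)

lemma vmul_scale: "vmul r (\<lambda>i. c * x i) F = (\<lambda>j. c * vmul r x F j)"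
  by (simp add: vmul_def algebra_simps sum_distrib_left)

lemma vmul_lincomb:
  "vmul r (\<lambda>i. \<Sum>a\<in>S. w a * x a i) F = (\<lambda>j. \<Sum>a\<in>S. w a * vmul r (x a) (F::'k::comm_semiring_1 mat) j)"
  unfolding vmul_def
  by (rule ext) (simp add: sum_distrib_left sum_distrib_right mult.assoc, rule sum.swap)

lemma vmul_zero [simp]: "vmul r (\<lambda>_. 0) F = (\<lambda>_. 0)"
  by (simp add: vmul_def)

lemma mmul_zmat_left [simp]: "mmul m zmat F = zmat"
  by (simp add: mmul_def zmat_def)

lemma mmul_zmat_right [simp]: "mmul m F zmat = zmat"
  by (simp add: mmul_def zmat_def)

lemma wf_mat_0_rows: "wf_mat 0 c F \<Longrightarrow> F = zmat"
  by (auto simp: wf_mat_def zmat_def)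

lemma vmul_idm: "vsupp n x \<Longrightarrow> vmul n x (idm n) = x"
  unfolding vmul_def idm_def vsupp_def by (rule ext) (simp add: if_distrib[of "\<lambda>y. _ * y"] cong: if_cong)

lemma idm_row: "a < n \<Longrightarrow> idm n a = unitv a"
  by (auto simp: idm_def unitv_def fun_eq_iff)

lemma mmul_idm_right: "wf_mat r n F \<Longrightarrow> mmul n F (idm n) = (F::'k::comm_semiring_1 mat)"
  by (rule ext) (simp add: mmul_row vmul_idm wf_mat_row_vsupp)

lemma mmul_idm_left:
  assumes "wf_mat r n F"
  shows "mmul r (idm r) F = (F::'k::comm_semiring_1 mat)"
proof
  fix a show "mmul r (idm r) F a = F a"
    using assms by (cases "a < r") (simp_all add: mmul_row idm_row vmul_unitv, simp add: wf_mat_def idm_def fun_eq_iff)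
qed

lemma wf_idm: "wf_mat n n (idm n)"
  by (simp add: wf_mat_def idm_def)

lemma mmul_lincomb_right:
  "mmul m F (\<lambda>i j. \<Sum>s\<in>S. c s * G s i j) = (\<lambda>i j. \<Sum>s\<in>S. c s * mmul m (F::'k::comm_semiring_1 mat) (G s) i j)"
  unfolding mmul_def
  by (rule ext, rule ext) (simp add: sum_distrib_left mult.left_commute, rule sum.swap)

lemma mmul_lincomb_left:
  "mmul m (\<lambda>i j. \<Sum>s\<in>S. c s * G s i j) F = (\<lambda>i j. \<Sum>s\<in>S. c s * mmul m (G s) (F::'k::comm_semiring_1 mat) i j)"
  unfolding mmul_def
  by (rule ext, rule ext) (simp add: sum_distrib_left sum_distrib_right mult.assoc, rule sum.swap)

lemma mmul_add_left: "mmul m (\<lambda>i j. F i j + G i j) H = (\<lambda>i j. mmul m F H i j + mmul m G H i j)"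
  by (simp add: mmul_def algebra_simps sum.distrib)

lemma mmul_add_right: "mmul m H (\<lambda>i j. F i j + G i j) = (\<lambda>i j. mmul m H F i j + mmul m H G i j)"
  by (simp add: mmul_def algebra_simps sum.distrib)

lemma mmul_scale_left: "mmul m (\<lambda>i j. c * F i j) H = (\<lambda>i j. c * mmul m F H i j)"
  by (simp add: mmul_def algebra_simps sum_distrib_left)

lemma mmul_scale_right: "mmul m H (\<lambda>i j. c * F i j) = (\<lambda>i j. c * mmul m H F i j)"
  by (simp add: mmul_def algebra_simps sum_distrib_left)

lemma inj_mat_vmul_eqD:
  fixes F :: "'k::field mat"
  assumes "inj_mat r F" "vsupp r x" "vsupp r y" "vmul r x F = vmul r y F"
  shows "x = y"
proof -
  have "(\<lambda>i. x i - y i) = (\<lambda>_. 0)"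
    using assms by (simp add: inj_mat_def vsupp_def vmul_diff)
  then show ?thesis by (simp add: fun_eq_iff)
qed

lemma inj_mat_mmul_cancel:
  fixes K :: "'k::field mat"
  assumes "inj_mat m K" "wf_mat r m X" "wf_mat r m Y" "mmul m X K = mmul m Y K"
  shows "X = Y"
proof
  fix a
  have "vmul m (X a) K = vmul m (Y a) K" using assms(4) mmul_row by metis
  then show "X a = Y a"
    using inj_mat_vmul_eqD[OF assms(1)] wf_mat_row_vsupp[OF assms(2)] wf_mat_row_vsupp[OF assms(3)]
    by blast
qed

lemma surj_mat_mmul_cancel:
  assumes "surj_mat r s e" "wf_mat s c X" "wf_mat s c Y" "mmul s e X = mmul s e Y"
  shows "X = Y"
proof
  fix a show "X a = Y a"
  proof (cases "a < s")
    case True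
    obtain x where x: "vsupp r x" "vmul r x e = unitv a"
      using assms(1) vsupp_unitv[OF True] unfolding surj_mat_def by blast
    have "X a = vmul r x (mmul s e X)" by (simp add: vmul_mmul[symmetric] x vmul_unitv[OF True])
    also have "\<dots> = Y a" by (simp add: assms(4) vmul_mmul[symmetric] x vmul_unitv[OF True])
    finally show ?thesis .
  next
    case False then show ?thesis using assms(2,3) by (auto simp: wf_mat_def)
  qed
qed

definition Emat :: "nat \<times> nat \<Rightarrow> nat \<Rightarrow> nat \<Rightarrow> 'k::zero_neq_one" where
  "Emat ab = (\<lambda>i j. if (i, j) = ab then 1 else 0)"

lemma wf_mat_in_span_Emat:
  assumes "wf_mat r c (F :: 'k::field mat)"
  shows "F \<in> mat.span (Emat ` ({..<r} \<times> {..<c}))"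
proof -
  have "F = (\<Sum>ab\<in>{..<r} \<times> {..<c}. mscale (F (fst ab) (snd ab)) (Emat ab))"
  proof (intro ext)
    fix i j
    have "(\<Sum>ab\<in>{..<r} \<times> {..<c}. mscale (F (fst ab) (snd ab)) (Emat ab)) i j
        = (\<Sum>ab\<in>{..<r} \<times> {..<c}. if ab = (i, j) then F i j else 0)"
      unfolding sum_fun_apply by (intro sum.cong) (auto simp: mscale_def Emat_def)
    also have "\<dots> = F i j"
      using assms by (simp add: wf_mat_def not_less)
    finally show "F i j = (\<Sum>ab\<in>{..<r} \<times> {..<c}. mscale (F (fst ab) (snd ab)) (Emat ab)) i j"
      by (rule sym)
  qed
  also have "\<dots> \<in> mat.span (Emat ` ({..<r} \<times> {..<c}))"
    by (intro mat.span_sum mat.span_scale mat.span_base) auto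
  finally show ?thesis .
qed

lemma vsupp_in_span_unitv:
  assumes "vsupp n v"
  shows "v \<in> vec.span (unitv ` {..<n})"
proof -
  have "v = (\<Sum>a<n. vscale (v a) (unitv a))"
  proof
    fix i
    have "(\<Sum>a<n. vscale (v a) (unitv a)) i = (\<Sum>a<n. if a = i then v i else 0)"
      unfolding sum_fun_apply by (intro sum.cong) (auto simp: vscale_def unitv_def)
    also have "\<dots> = v i" using assms by (simp add: vsupp_def not_less)
    finally show "v i = (\<Sum>a<n. vscale (v a) (unitv a)) i" by (rule sym)
  qed
  also have "\<dots> \<in> vec.span (unitv ` {..<n})"
    by (intro vec.span_sum vec.span_scale vec.span_base) auto
  finally show ?thesis .
qed

lemma full_dim_subspace_contains_vsupp:
  assumes WV: "W \<subseteq> {v. vsupp n v}" and sub: "vec.subspace W" and d: "vec.dim W = n"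
  shows "{v. vsupp n v} \<subseteq> W"
proof -
  obtain B where B: "B \<subseteq> W" "vec.independent B" "W \<subseteq> vec.span B" "card B = vec.dim W"
    using vec.basis_exists by blast
  have "unitv ` {..<n} \<subseteq> vec.span B"
  proof (rule vec.finite_subset_span_of_larger_independent)
    show "B \<subseteq> vec.span (unitv ` {..<n})" using B(1) WV vsupp_in_span_unitv by blast
    show "card (unitv ` {..<n}) \<le> card B" using card_image_le[of "{..<n}" unitv] B(4) d by simp
  qed (use B(2) in simp_all)
  also have "vec.span B \<subseteq> W" by (rule vec.span_minimal[OF B(1) sub])
  finally have "vec.span (unitv ` {..<n}) \<subseteq> W" by (rule vec.span_minimal[OF _ sub])
  then show ?thesis using vsupp_in_span_unitv by blast
qed

lemma module_act_wf: "is_module A M \<Longrightarrow> p < adim A \<Longrightarrow> wf_mat (mdim M) (mdim M) (mact M p)"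
  by (simp add: is_module_def Let_def)

lemma hom_wf: "is_hom A M N F \<Longrightarrow> wf_mat (mdim M) (mdim N) F"
  by (simp add: is_hom_def)

lemma hom_commute:
  "is_hom A M N F \<Longrightarrow> p < adim A \<Longrightarrow> mmul (mdim M) (mact M p) F = mmul (mdim N) F (mact N p)"
  by (simp add: is_hom_def)

lemma hom_comp:
  assumes "is_hom A M N F" "is_hom A N L G"
  shows "is_hom A M L (mmul (mdim N) F G)"
  unfolding is_hom_def
proof (intro conjI allI impI)
  show "wf_mat (mdim M) (mdim L) (mmul (mdim N) F G)"
    by (rule wf_mmul[OF hom_wf[OF assms(1)] hom_wf[OF assms(2)]])
  fix p assume p: "p < adim A"
  have "mmul (mdim M) (mact M p) (mmul (mdim N) F G) = mmul (mdim N) (mmul (mdim M) (mact M p) F) G"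
    by (simp add: mmul_assoc)
  also have "\<dots> = mmul (mdim N) F (mmul (mdim N) (mact N p) G)"
    by (simp add: hom_commute[OF assms(1) p] mmul_assoc)
  also have "\<dots> = mmul (mdim L) (mmul (mdim N) F G) (mact L p)"
    by (simp add: hom_commute[OF assms(2) p] mmul_assoc)
  finally show "mmul (mdim M) (mact M p) (mmul (mdim N) F G) = mmul (mdim L) (mmul (mdim N) F G) (mact L p)" .
qed

lemma hom_zmat: "is_hom A M N zmat"
  by (simp add: is_hom_def wf_mat_def zmat_def mmul_def)

lemma hom_idm: "is_module A M \<Longrightarrow> is_hom A M M (idm (mdim M))"
  by (simp add: is_hom_def wf_idm mmul_idm_right[OF module_act_wf] mmul_idm_left[OF module_act_wf])

lemma hom_add: "is_hom A M N F \<Longrightarrow> is_hom A M N G \<Longrightarrow> is_hom A M N (\<lambda>i j. F i j + G i j)"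
  unfolding is_hom_def by (auto simp: wf_mat_def mmul_add_left mmul_add_right)

lemma hom_scale: "is_hom A M N F \<Longrightarrow> is_hom A M N (\<lambda>i j. c * F i j)"
  unfolding is_hom_def by (auto simp: wf_mat_def mmul_scale_left mmul_scale_right)

lemma subspace_homs: "mat.subspace {F. is_hom A M N F}"
  unfolding mat.subspace_def
  by (auto simp: mscale_def hom_add hom_scale hom_zmat zero_fun_eq_zmat plus_fun_def)

lemma homs_in_span_Emat: "{F. is_hom A M N F} \<subseteq> mat.span (Emat ` ({..<mdim M} \<times> {..<mdim N}))"
  using wf_mat_in_span_Emat hom_wf by blast

lemma epi_comp:
  fixes A :: "'k::field alg"
  assumes "is_epi A M N F" "is_epi A N L G"
  shows "is_epi A M L (mmul (mdim N) F G)"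
  unfolding is_epi_def
proof (intro conjI allI impI)
  show "is_hom A M L (mmul (mdim N) F G)" using assms hom_comp by (auto simp: is_epi_def)
  show "surj_mat (mdim M) (mdim L) (mmul (mdim N) F G)"
    unfolding surj_mat_def
  proof (intro allI impI)
    fix w :: "nat \<Rightarrow> 'k" assume "vsupp (mdim L) w"
    then obtain y where y: "vsupp (mdim N) y" "vmul (mdim N) y G = w"
      using assms(2) unfolding is_epi_def surj_mat_def by blast
    obtain x where x: "vsupp (mdim M) x" "vmul (mdim M) x F = y"
      using assms(1) y(1) unfolding is_epi_def surj_mat_def by blast
    have "vmul (mdim M) x (mmul (mdim N) F G) = w" by (simp add: vmul_mmul[symmetric] x(2) y(2))
    then show "\<exists>v. vsupp (mdim M) v \<and> vmul (mdim M) v (mmul (mdim N) F G) = w" using x(1) by blast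
  qed
qed

lemma mat_factors_through_rows:
  assumes rows: "\<And>a. a < r \<Longrightarrow> G a \<in> row_image s F" and G: "wf_mat r c G"
  obtains X where "wf_mat r s X" "mmul s X F = G"
proof -
  have "\<forall>a\<in>{..<r}. \<exists>u. vsupp s u \<and> vmul s u F = G a"
    using rows by (simp add: mem_row_image_iff)
  from bchoice[OF this] obtain X0 where X0: "\<And>a. a < r \<Longrightarrow> vsupp s (X0 a) \<and> vmul s (X0 a) F = G a"
    by blast
  define X where "X = (\<lambda>a. if a < r then X0 a else (\<lambda>_. 0))"
  show ?thesis
  proof
    show "wf_mat r s X" using X0 by (auto simp: wf_mat_def X_def vsupp_def)
    show "mmul s X F = G"
    proof
      fix a show "mmul s X F a = G a"
        using X0[of a] G by (cases "a < r") (simp_all add: mmul_row X_def wf_mat_def fun_eq_iff)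
    qed
  qed
qed

lemma hom_factors_through_mono:
  assumes P: "is_module A P" and K: "is_module A K" and g: "is_hom A P R g" and k: "is_mono A K R \<kappa>"
    and rows: "\<And>a. a < mdim P \<Longrightarrow> g a \<in> row_image (mdim K) \<kappa>"
  shows "\<exists>g'. is_hom A P K g' \<and> mmul (mdim K) g' \<kappa> = g"
proof -
  obtain g' where wf: "wf_mat (mdim P) (mdim K) g'" and eq: "mmul (mdim K) g' \<kappa> = g"
    using mat_factors_through_rows[OF rows hom_wf[OF g]] by blast
  have k1: "is_hom A K R \<kappa>" "inj_mat (mdim K) \<kappa>" using k by (auto simp: is_mono_def)
  have "is_hom A P K g'"
    unfolding is_hom_def
  proof (intro conjI allI impI wf)
    fix p assume p: "p < adim A"
    show "mmul (mdim P) (mact P p) g' = mmul (mdim K) g' (mact K p)"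
    proof (rule inj_mat_mmul_cancel[OF k1(2)])
      show "wf_mat (mdim P) (mdim K) (mmul (mdim P) (mact P p) g')"
        using module_act_wf[OF P p] wf by (rule wf_mmul)
      show "wf_mat (mdim P) (mdim K) (mmul (mdim K) g' (mact K p))"
        using wf module_act_wf[OF K p] by (rule wf_mmul)
      have "mmul (mdim K) (mmul (mdim P) (mact P p) g') \<kappa> = mmul (mdim P) (mact P p) g"
        by (simp add: mmul_assoc eq)
      also have "\<dots> = mmul (mdim R) (mmul (mdim K) g' \<kappa>) (mact R p)"
        by (simp add: hom_commute[OF g p] eq)
      also have "\<dots> = mmul (mdim K) (mmul (mdim K) g' (mact K p)) \<kappa>"
        by (simp add: mmul_assoc hom_commute[OF k1(1) p])
      finally show "mmul (mdim K) (mmul (mdim P) (mact P p) g') \<kappa> = mmul (mdim K) (mmul (mdim K) g' (mact K p)) \<kappa>" .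
    qed
  qed
  then show ?thesis using eq by blast
qed

lemma hom_factors_through_epi:
  assumes S: "is_module A S" and M: "is_module A M"
    and e: "is_epi A P S e" and \<phi>: "is_hom A P M \<phi>"
    and ker: "row_kernel (mdim P) e \<subseteq> row_kernel (mdim P) \<phi>"
  shows "\<exists>\<psi>. is_hom A S M \<psi> \<and> mmul (mdim S) e \<psi> = \<phi>"
proof -
  have eh: "is_hom A P S e" and es: "surj_mat (mdim P) (mdim S) e" using e by (auto simp: is_epi_def)
  have "\<forall>a\<in>{..<mdim S}. \<exists>x. vsupp (mdim P) x \<and> vmul (mdim P) x e = unitv a"
    using es vsupp_unitv unfolding surj_mat_def by blast
  from bchoice[OF this] obtain X
    where X: "\<And>a. a < mdim S \<Longrightarrow> vsupp (mdim P) (X a) \<and> vmul (mdim P) (X a) e = unitv a"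
    by blast
  define \<psi> where "\<psi> = (\<lambda>a. if a < mdim S then vmul (mdim P) (X a) \<phi> else (\<lambda>_. 0))"
  have wf\<psi>: "wf_mat (mdim S) (mdim M) \<psi>"
    using vsupp_vmul[OF hom_wf[OF \<phi>]] unfolding wf_mat_def \<psi>_def vsupp_def by auto
  txt \<open>A preimage under e of w = x e is y = sum w_a X_a; as x - y lies in the kernel of e, it
    lies in the kernel of phi as well.\<close>
  have key: "vmul (mdim S) (vmul (mdim P) x e) \<psi> = vmul (mdim P) x \<phi>" if x: "vsupp (mdim P) x" for x
  proof -
    define w where "w = vmul (mdim P) x e"
    have ws: "vsupp (mdim S) w" unfolding w_def by (rule vsupp_vmul[OF hom_wf[OF eh]])
    define y where "y = (\<lambda>i. \<Sum>a<mdim S. w a * X a i)"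
    have ys: "vsupp (mdim P) y" using X unfolding y_def vsupp_def by auto
    have "vmul (mdim P) y e = (\<lambda>j. \<Sum>a<mdim S. w a * unitv a j)"
      unfolding y_def vmul_lincomb using X by simp
    also have "\<dots> = vmul (mdim S) w (idm (mdim S))"
      unfolding vmul_def by (intro ext sum.cong) (simp_all add: idm_row)
    also have "\<dots> = w" by (rule vmul_idm[OF ws])
    finally have "vmul (mdim P) (\<lambda>i. x i - y i) e = (\<lambda>_. 0)" by (simp add: vmul_diff w_def)
    moreover have "vsupp (mdim P) (\<lambda>i. x i - y i)" using x ys by (simp add: vsupp_def)
    ultimately have "vmul (mdim P) (\<lambda>i. x i - y i) \<phi> = (\<lambda>_. 0)"
      using ker by (auto simp: row_kernel_def)
    then have "vmul (mdim P) x \<phi> = vmul (mdim P) y \<phi>" by (simp add: vmul_diff fun_eq_iff)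
    also have "\<dots> = vmul (mdim S) w \<psi>"
      unfolding y_def vmul_lincomb by (simp add: vmul_def \<psi>_def)
    finally show ?thesis by (simp add: w_def)
  qed
  have eq: "mmul (mdim S) e \<psi> = \<phi>"
  proof
    fix a show "mmul (mdim S) e \<psi> a = \<phi> a"
    proof (cases "a < mdim P")
      case True
      then show ?thesis using key[OF vsupp_unitv[OF True]] by (simp add: mmul_row vmul_unitv)
    next
      case False
      then show ?thesis using hom_wf[OF eh] hom_wf[OF \<phi>] by (simp add: mmul_row wf_mat_def fun_eq_iff vmul_def)
    qed
  qed
  have "is_hom A S M \<psi>"
    unfolding is_hom_def
  proof (intro conjI allI impI wf\<psi>)
    fix p assume p: "p < adim A"
    show "mmul (mdim S) (mact S p) \<psi> = mmul (mdim M) \<psi> (mact M p)"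
    proof (rule surj_mat_mmul_cancel[OF es])
      show "wf_mat (mdim S) (mdim M) (mmul (mdim S) (mact S p) \<psi>)"
        using module_act_wf[OF S p] wf\<psi> by (rule wf_mmul)
      show "wf_mat (mdim S) (mdim M) (mmul (mdim M) \<psi> (mact M p))"
        using wf\<psi> module_act_wf[OF M p] by (rule wf_mmul)
      have "mmul (mdim S) e (mmul (mdim S) (mact S p) \<psi>) = mmul (mdim P) (mact P p) (mmul (mdim S) e \<psi>)"
        by (simp add: mmul_assoc[symmetric] hom_commute[OF eh p])
      also have "\<dots> = mmul (mdim M) (mmul (mdim S) e \<psi>) (mact M p)"
        by (simp add: eq hom_commute[OF \<phi> p])
      finally show "mmul (mdim S) e (mmul (mdim S) (mact S p) \<psi>) = mmul (mdim S) e (mmul (mdim M) \<psi> (mact M p))"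
        by (simp add: mmul_assoc)
    qed
  qed
  then show ?thesis using eq by blast
qed

lemma module_pullback:
  assumes M: "is_module A M" and inj: "inj_mat r \<iota>" and wf: "wf_mat r (mdim M) \<iota>"
    and X: "\<And>p. p < adim A \<Longrightarrow> wf_mat r r (X p) \<and> mmul r (X p) \<iota> = mmul (mdim M) \<iota> (mact M p)"
  shows "is_module A \<lparr>mdim = r, mact = X\<rparr>"
proof -
  let ?d = "adim A" and ?n = "mdim M"
  have mul: "mmul r (X p) (X q) = (\<lambda>i j. \<Sum>s<?d. amul A p q s * X s i j)" if p: "p < ?d" and q: "q < ?d" for p q
  proof (rule inj_mat_mmul_cancel[OF inj])
    show "wf_mat r r (mmul r (X p) (X q))" using X p q by (auto intro: wf_mmul)
    show "wf_mat r r (\<lambda>i j. \<Sum>s<?d. amul A p q s * X s i j)" using X by (auto intro: wf_lincomb)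
    have "mmul r (mmul r (X p) (X q)) \<iota> = mmul r (X p) (mmul ?n \<iota> (mact M q))"
      using X q by (simp add: mmul_assoc)
    also have "\<dots> = mmul ?n \<iota> (mmul ?n (mact M p) (mact M q))"
      using X p by (simp add: mmul_assoc[symmetric])
    also have "\<dots> = mmul ?n \<iota> (\<lambda>i j. \<Sum>s<?d. amul A p q s * mact M s i j)"
      using M p q by (simp add: is_module_def Let_def)
    also have "\<dots> = mmul r (\<lambda>i j. \<Sum>s<?d. amul A p q s * X s i j) \<iota>"
      unfolding mmul_lincomb_right mmul_lincomb_left using X by (intro ext sum.cong) auto
    finally show "mmul r (mmul r (X p) (X q)) \<iota> = mmul r (\<lambda>i j. \<Sum>s<?d. amul A p q s * X s i j) \<iota>" .
  qed
  have one: "(\<lambda>i j. \<Sum>p<?d. aone A p * X p i j) = idm r"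
  proof (rule inj_mat_mmul_cancel[OF inj])
    show "wf_mat r r (\<lambda>i j. \<Sum>p<?d. aone A p * X p i j)" using X by (auto intro: wf_lincomb)
    show "wf_mat r r (idm r)" by (rule wf_idm)
    have "mmul r (\<lambda>i j. \<Sum>p<?d. aone A p * X p i j) \<iota> = mmul ?n \<iota> (\<lambda>i j. \<Sum>p<?d. aone A p * mact M p i j)"
      unfolding mmul_lincomb_right mmul_lincomb_left using X by (intro ext sum.cong) auto
    also have "\<dots> = mmul r (idm r) \<iota>"
      using M mmul_idm_right[OF wf] mmul_idm_left[OF wf] by (simp add: is_module_def Let_def)
    finally show "mmul r (\<lambda>i j. \<Sum>p<?d. aone A p * X p i j) \<iota> = mmul r (idm r) \<iota>" .
  qed
  show ?thesis unfolding is_module_def Let_def using X mul one by simp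
qed

lemma row_image_subset_vsupp: "wf_mat r c F \<Longrightarrow> row_image r F \<subseteq> {v. vsupp c v}"
  using vsupp_vmul by (auto simp: row_image_def)

lemma subspace_row_image: "vec.subspace (row_image n (F::'k::field mat))"
  unfolding vec.subspace_def row_image_def
proof (intro conjI ballI allI)
  have "vsupp n (\<lambda>_. 0 :: 'k)" by (simp add: vsupp_def)
  then show "0 \<in> {vmul n x F |x. vsupp n x}" by (force simp: zero_fun_def)
next
  fix x y assume "x \<in> {vmul n x F |x. vsupp n x}" "y \<in> {vmul n x F |x. vsupp n x}"
  then obtain a b where "x = vmul n a F" "vsupp n a" "y = vmul n b F" "vsupp n b" by blast
  then show "x + y \<in> {vmul n x F |x. vsupp n x}"
    by (intro CollectI exI[of _ "\<lambda>i. a i + b i"]) (simp add: vmul_add plus_fun_def vsupp_def)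
next
  fix c x assume "x \<in> {vmul n x F |x. vsupp n x}"
  then obtain a where "x = vmul n a F" "vsupp n a" by blast
  then show "vscale c x \<in> {vmul n x F |x. vsupp n x}"
    by (intro CollectI exI[of _ "\<lambda>i. c * a i"]) (simp add: vmul_scale vscale_def vsupp_def)
qed

lemma subspace_row_kernel: "vec.subspace (row_kernel n (F::'k::field mat))"
  unfolding vec.subspace_def row_kernel_def
  by (auto simp: zero_fun_def plus_fun_def vscale_def vsupp_def vmul_add vmul_scale)

definition rows_mat :: "(nat \<Rightarrow> 'k::zero) list \<Rightarrow> 'k mat" where
  "rows_mat bs = (\<lambda>a j. if a < length bs then (bs!a) j else 0)"

lemma vmul_rows_mat: "vmul (length bs) u (rows_mat bs) = (\<Sum>l<length bs. vscale (u l) (bs!l))"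
  unfolding vmul_def rows_mat_def by (rule ext) (simp add: sum_fun_apply vscale_def)

lemma row_image_rows_mat:
  assumes "distinct bs"
  shows "row_image (length bs) (rows_mat bs) = vec.span (set bs)"
proof (intro set_eqI iffI)
  fix x assume "x \<in> vec.span (set bs)"
  then obtain c where c: "x = (\<Sum>l<length bs. vscale (c l) (bs!l))"
    using vec.span_set_eq_lincombs[OF assms] by blast
  let ?u = "\<lambda>l. if l < length bs then c l else 0"
  have "x = vmul (length bs) ?u (rows_mat bs)" unfolding c vmul_rows_mat by (rule sum.cong) auto
  moreover have "vsupp (length bs) ?u" by (simp add: vsupp_def)
  ultimately show "x \<in> row_image (length bs) (rows_mat bs)" unfolding mem_row_image_iff by blast
qed (auto simp: row_image_def vmul_rows_mat vec.span_set_eq_lincombs[OF assms])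

lemma inj_mat_rows_mat:
  assumes "vec.independent_list bs"
  shows "inj_mat (length bs) (rows_mat bs)"
  unfolding inj_mat_def
proof (intro allI impI)
  fix u assume u: "vsupp (length bs) u" "vmul (length bs) u (rows_mat bs) = (\<lambda>_. 0)"
  have "(\<Sum>l<length bs. vscale (u l) (bs!l)) = 0"
    using u(2) unfolding vmul_rows_mat by (simp add: zero_fun_def)
  then have "\<forall>l<length bs. u l = 0" using assms unfolding vec.independent_list_def by blast
  then show "u = (\<lambda>_. 0)" using u(1) by (auto simp: vsupp_def fun_eq_iff not_less[symmetric])
qed

lemma wf_mat_rows_mat: "set bs \<subseteq> {v. vsupp n v} \<Longrightarrow> wf_mat (length bs) n (rows_mat bs)"
  using nth_mem by (fastforce simp: wf_mat_def rows_mat_def vsupp_def)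

lemma invariant_subspace_submodule:
  assumes M: "is_module A M" and WV: "W \<subseteq> {v. vsupp (mdim M) v}" and sub: "vec.subspace W"
    and inv: "\<And>w p. w \<in> W \<Longrightarrow> p < adim A \<Longrightarrow> vmul (mdim M) w (mact M p) \<in> W"
  obtains V \<iota> where "is_module A V" "is_mono A V M \<iota>" "row_image (mdim V) \<iota> = W" "mdim V = vec.dim W"
proof -
  obtain B where B: "B \<subseteq> W" "vec.independent B" "W \<subseteq> vec.span B" "card B = vec.dim W"
    using vec.basis_exists by blast
  have "B \<subseteq> vec.span (unitv ` {..<mdim M})" using B(1) WV vsupp_in_span_unitv by blast
  then have "finite B" using vec.independent_span_bound[OF _ B(2)] by blast
  then obtain bs where bs: "set bs = B" "distinct bs" using finite_distinct_list by blast
  let ?r = "length bs" and ?\<iota> = "rows_mat bs"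
  have img: "row_image ?r ?\<iota> = W"
    using row_image_rows_mat[OF bs(2)] vec.span_subspace[OF B(1,3) sub] bs(1) by simp
  have inj: "inj_mat ?r ?\<iota>" using bs B(2) by (intro inj_mat_rows_mat) (simp add: vec.independent_list_iff)
  have wf: "wf_mat ?r (mdim M) ?\<iota>" using bs(1) B(1) WV by (intro wf_mat_rows_mat) blast
  have dim: "?r = vec.dim W" using bs B(4) distinct_card by metis
  have "\<exists>X. wf_mat ?r ?r X \<and> mmul ?r X ?\<iota> = mmul (mdim M) ?\<iota> (mact M p)" if p: "p < adim A" for p
  proof (rule mat_factors_through_rows)
    show "mmul (mdim M) ?\<iota> (mact M p) a \<in> row_image ?r ?\<iota>" if "a < ?r" for a
      using inv[OF _ p] img bs(1) B(1) nth_mem[OF that] that by (auto simp: mmul_row rows_mat_def)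
  qed (use wf module_act_wf[OF M p] wf_mmul in blast)+
  then obtain X where X: "\<And>p. p < adim A \<Longrightarrow> wf_mat ?r ?r (X p) \<and> mmul ?r (X p) ?\<iota> = mmul (mdim M) ?\<iota> (mact M p)"
    by metis
  show ?thesis
  proof
    show "is_module A \<lparr>mdim = ?r, mact = X\<rparr>" by (rule module_pullback[OF M inj wf X])
    show "is_mono A \<lparr>mdim = ?r, mact = X\<rparr> M ?\<iota>" using wf X inj by (simp add: is_mono_def is_hom_def)
  qed (simp add: img, simp add: dim)
qed

lemma image_submodule:
  assumes M: "is_module A M" and N: "is_module A N" and f: "is_hom A M N f"
  obtains V \<iota> where "is_module A V" "is_mono A V N \<iota>" "row_image (mdim V) \<iota> = row_image (mdim M) f"
    "mdim V = vec.dim (row_image (mdim M) f)"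
proof (rule invariant_subspace_submodule[OF N row_image_subset_vsupp[OF hom_wf[OF f]] subspace_row_image])
  fix w p assume "w \<in> row_image (mdim M) f" and p: "p < adim A"
  then obtain x where x: "vsupp (mdim M) x" "w = vmul (mdim M) x f" by (auto simp: row_image_def)
  have "vmul (mdim N) w (mact N p) = vmul (mdim M) (vmul (mdim M) x (mact M p)) f"
    by (simp add: x(2) vmul_mmul hom_commute[OF f p])
  then show "vmul (mdim N) w (mact N p) \<in> row_image (mdim M) f"
    using vsupp_vmul[OF module_act_wf[OF M p]] by (auto simp: row_image_def)
qed (rule that)

lemma kernel_submodule:
  assumes M: "is_module A M" and f: "is_hom A M N f"
  obtains V \<iota> where "is_module A V" "is_mono A V M \<iota>" "row_image (mdim V) \<iota> = row_kernel (mdim M) f"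
    "mdim V = vec.dim (row_kernel (mdim M) f)"
proof (rule invariant_subspace_submodule[OF M _ subspace_row_kernel])
  show "row_kernel (mdim M) f \<subseteq> {v. vsupp (mdim M) v}" by (auto simp: row_kernel_def)
  fix w p assume w: "w \<in> row_kernel (mdim M) f" and p: "p < adim A"
  have "vmul (mdim M) (vmul (mdim M) w (mact M p)) f = vmul (mdim N) (vmul (mdim M) w f) (mact N p)"
    by (simp add: vmul_mmul hom_commute[OF f p])
  then show "vmul (mdim M) w (mact M p) \<in> row_kernel (mdim M) f"
    using w vsupp_vmul[OF module_act_wf[OF M p]] by (simp add: row_kernel_def)
qed (rule that)

section \<open>Simple modules and projective covers\<close>

lemma simple_submodule_dim:
  "simple_mod A M \<Longrightarrow> is_module A V \<Longrightarrow> is_mono A V M \<iota> \<Longrightarrow> mdim V = 0 \<or> mdim V = mdim M"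
  unfolding simple_mod_def by blast

lemma hom_to_simple_surj_or_zero:
  assumes M: "simple_mod A M" and N: "is_module A N" and f: "is_hom A N M f"
  shows "surj_mat (mdim N) (mdim M) f \<or> row_image (mdim N) f = {\<lambda>_. 0}"
proof -
  have Mm: "is_module A M" using M by (simp add: simple_mod_def)
  obtain V \<iota> where V: "is_module A V" "is_mono A V M \<iota>" "row_image (mdim V) \<iota> = row_image (mdim N) f"
    "mdim V = vec.dim (row_image (mdim N) f)"
    using image_submodule[OF N Mm f] .
  have "mdim V = 0 \<or> mdim V = mdim M" using simple_submodule_dim[OF M V(1,2)] .
  then show ?thesis
  proof
    assume "mdim V = 0"
    then show ?thesis using V(3) by (simp add: row_image_0)
  next
    assume "mdim V = mdim M"
    then have "{v. vsupp (mdim M) v} \<subseteq> row_image (mdim N) f"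
      using full_dim_subspace_contains_vsupp[OF row_image_subset_vsupp[OF hom_wf[OF f]] subspace_row_image] V(4)
      by simp
    then show ?thesis by (simp add: surj_mat_iff_row_image)
  qed
qed

lemma hom_from_simple_inj_or_zero:
  assumes S: "simple_mod A S" and f: "is_hom A S M f"
  shows "inj_mat (mdim S) f \<or> row_image (mdim S) f = {\<lambda>_. 0}"
proof -
  have Sm: "is_module A S" using S by (simp add: simple_mod_def)
  obtain V \<iota> where V: "is_module A V" "is_mono A V S \<iota>" "row_image (mdim V) \<iota> = row_kernel (mdim S) f"
    "mdim V = vec.dim (row_kernel (mdim S) f)"
    using kernel_submodule[OF Sm f] .
  have "mdim V = 0 \<or> mdim V = mdim S" using simple_submodule_dim[OF S V(1,2)] .
  then show ?thesis
  proof
    assume "mdim V = 0"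
    then have "row_kernel (mdim S) f = {\<lambda>_. 0}" using V(3) by (simp add: row_image_0)
    then show ?thesis by (auto simp: inj_mat_def row_kernel_def)
  next
    assume "mdim V = mdim S"
    moreover have "row_kernel (mdim S) f \<subseteq> {v. vsupp (mdim S) v}" by (auto simp: row_kernel_def)
    ultimately have "{v. vsupp (mdim S) v} \<subseteq> row_kernel (mdim S) f"
      using full_dim_subspace_contains_vsupp[OF _ subspace_row_kernel] V(4) by simp
    then have "row_image (mdim S) f \<subseteq> {\<lambda>_. 0}" by (auto simp: row_image_def row_kernel_def)
    moreover have "(\<lambda>_. 0) \<in> row_image (mdim S) f" by (auto simp: row_image_def vsupp_def intro!: exI[of _ "\<lambda>_. 0"])
    ultimately show ?thesis by blast
  qed
qed

lemma proj_cover_surj_if_kernel_sum: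
  fixes A :: "'k::field alg"
  assumes pc: "proj_cover A P S e" and Q: "is_module A Q" and q: "is_hom A Q P q"
    and sum: "\<And>x. vsupp (mdim P) x \<Longrightarrow> \<exists>y\<in>row_kernel (mdim P) e. x - y \<in> row_image (mdim Q) q"
  shows "surj_mat (mdim Q) (mdim P) q"
proof -
  have es: "surj_mat (mdim P) (mdim S) e" using pc by (simp add: proj_cover_def is_epi_def)
  have "surj_mat (mdim Q) (mdim S) (mmul (mdim P) q e)"
    unfolding surj_mat_def
  proof (intro allI impI)
    fix w :: "nat \<Rightarrow> 'k" assume "vsupp (mdim S) w"
    then obtain x where x: "vsupp (mdim P) x" "vmul (mdim P) x e = w" using es by (auto simp: surj_mat_def)
    obtain y z where y: "y \<in> row_kernel (mdim P) e" and z: "vsupp (mdim Q) z" "vmul (mdim Q) z q = x - y"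
      using sum[OF x(1)] by (auto simp: mem_row_image_iff)
    have "vmul (mdim Q) z (mmul (mdim P) q e) = vmul (mdim P) (\<lambda>i. x i - y i) e"
      by (simp add: vmul_mmul[symmetric] z(2) fun_diff_def)
    also have "\<dots> = w" using x(2) y by (simp add: vmul_diff row_kernel_def)
    finally show "\<exists>v. vsupp (mdim Q) v \<and> vmul (mdim Q) v (mmul (mdim P) q e) = w" using z(1) by blast
  qed
  then show ?thesis using pc Q q by (simp add: proj_cover_def)
qed

lemma proj_cover_kernel_killed_by_simple_quotient:
  fixes A :: "'k::field alg"
  assumes pc: "proj_cover A P S e" and M: "simple_mod A M" and \<phi>: "is_epi A P M \<phi>"
  shows "row_kernel (mdim P) e \<subseteq> row_kernel (mdim P) \<phi>"
proof -
  have Pm: "is_module A P" using pc by (simp add: proj_cover_def projective_mod_def)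
  have Mm: "is_module A M" and M0: "0 < mdim M" using M by (auto simp: simple_mod_def)
  have eh: "is_hom A P S e" using pc by (simp add: proj_cover_def is_epi_def)
  have ph: "is_hom A P M \<phi>" and ps: "surj_mat (mdim P) (mdim M) \<phi>" using \<phi> by (auto simp: is_epi_def)
  obtain N n where N: "is_module A N" "is_mono A N P n" "row_image (mdim N) n = row_kernel (mdim P) e"
    using kernel_submodule[OF Pm eh] by blast
  have nh: "is_hom A N P n" using N(2) by (simp add: is_mono_def)
  have row_image_n\<phi>: "row_image (mdim N) (mmul (mdim P) n \<phi>) = {vmul (mdim P) y \<phi> | y. y \<in> row_kernel (mdim P) e}"
    unfolding N(3)[symmetric] row_image_def by (auto simp: vmul_mmul[symmetric]; blast)
  txt \<open>The restriction of phi to the kernel of e is zero or onto M, and being onto would make the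
    kernel of phi supplement the superfluous kernel of e.\<close>
  consider "surj_mat (mdim N) (mdim M) (mmul (mdim P) n \<phi>)"
    | "row_image (mdim N) (mmul (mdim P) n \<phi>) = {\<lambda>_. 0}"
    using hom_to_simple_surj_or_zero[OF M N(1) hom_comp[OF nh ph]] by blast
  then show ?thesis
  proof cases
    case 1
    obtain Q q where Q: "is_module A Q" "is_mono A Q P q" "row_image (mdim Q) q = row_kernel (mdim P) \<phi>"
      using kernel_submodule[OF Pm ph] by blast
    have "surj_mat (mdim Q) (mdim P) q"
    proof (rule proj_cover_surj_if_kernel_sum[OF pc Q(1)])
      show "is_hom A Q P q" using Q(2) by (simp add: is_mono_def)
      fix x :: "nat \<Rightarrow> 'k" assume x: "vsupp (mdim P) x"
      have "vmul (mdim P) x \<phi> \<in> row_image (mdim N) (mmul (mdim P) n \<phi>)"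
        using 1 vsupp_vmul[OF hom_wf[OF ph]] unfolding surj_mat_iff_row_image by blast
      then obtain y where y: "y \<in> row_kernel (mdim P) e" "vmul (mdim P) x \<phi> = vmul (mdim P) y \<phi>"
        unfolding row_image_n\<phi> by blast
      have "vsupp (mdim P) y" using y(1) by (simp add: row_kernel_def)
      then have "x - y \<in> row_kernel (mdim P) \<phi>"
        using x y(2) unfolding row_kernel_def fun_diff_def by (simp add: vmul_diff vsupp_def)
      then show "\<exists>y\<in>row_kernel (mdim P) e. x - y \<in> row_image (mdim Q) q" using y(1) Q(3) by blast
    qed
    then have ker\<phi>: "{v. vsupp (mdim P) v} \<subseteq> row_kernel (mdim P) \<phi>"
      using Q(3) by (simp add: surj_mat_iff_row_image)
    obtain x where "vsupp (mdim P) x" "vmul (mdim P) x \<phi> = unitv 0"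
      using ps vsupp_unitv[OF M0] unfolding surj_mat_def by blast
    then have "unitv 0 = (\<lambda>_. 0 :: 'k)" using ker\<phi> by (auto simp: row_kernel_def)
    then have "unitv 0 (0::nat) = (0::'k)" by simp
    then show ?thesis by (simp add: unitv_def)
  next
    case 2
    show ?thesis
    proof
      fix x assume x: "x \<in> row_kernel (mdim P) e"
      then have "vmul (mdim P) x \<phi> \<in> row_image (mdim N) (mmul (mdim P) n \<phi>)"
        unfolding row_image_n\<phi> by blast
      then show "x \<in> row_kernel (mdim P) \<phi>" using x 2 by (simp add: row_kernel_def)
    qed
  qed
qed

lemma isomorphic_sym:
  fixes A :: "'k::field alg"
  assumes M: "is_module A M" and N: "is_module A N" and "isomorphic A M N"
  shows "isomorphic A N M"
proof -
  obtain F where F: "is_hom A M N F" "inj_mat (mdim M) F" "surj_mat (mdim M) (mdim N) F"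
    using assms(3) by (auto simp: isomorphic_def is_mono_def is_epi_def)
  have "is_mono A M N F" using F by (simp add: is_mono_def)
  moreover have "idm (mdim N) a \<in> row_image (mdim M) F" if "a < mdim N" for a
    using F(3) vsupp_unitv[OF that] unfolding surj_mat_iff_row_image idm_row[OF that] by blast
  ultimately obtain G where G: "is_hom A N M G" "mmul (mdim M) G F = idm (mdim N)"
    using hom_factors_through_mono[OF N M hom_idm[OF N]] by blast
  have FG: "mmul (mdim N) F G = idm (mdim M)"
  proof (rule inj_mat_mmul_cancel[OF F(2)])
    show "wf_mat (mdim M) (mdim M) (mmul (mdim N) F G)" using hom_wf[OF F(1)] hom_wf[OF G(1)] by (rule wf_mmul)
    show "mmul (mdim M) (mmul (mdim N) F G) F = mmul (mdim M) (idm (mdim M)) F"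
      using G(2) mmul_idm_right[OF hom_wf[OF F(1)]] mmul_idm_left[OF hom_wf[OF F(1)]] by (simp add: mmul_assoc)
  qed (rule wf_idm)
  have "inj_mat (mdim N) G"
    unfolding inj_mat_def
  proof (intro allI impI)
    fix x :: "nat \<Rightarrow> 'k" assume x: "vsupp (mdim N) x" "vmul (mdim N) x G = (\<lambda>_. 0)"
    have "x = vmul (mdim M) (vmul (mdim N) x G) F" by (simp add: vmul_mmul G(2) vmul_idm[OF x(1)])
    then show "x = (\<lambda>_. 0)" using x(2) by simp
  qed
  moreover have "surj_mat (mdim N) (mdim M) G"
    unfolding surj_mat_def
  proof (intro allI impI)
    fix w :: "nat \<Rightarrow> 'k" assume w: "vsupp (mdim M) w"
    have "vmul (mdim N) (vmul (mdim M) w F) G = w" by (simp add: vmul_mmul FG vmul_idm[OF w])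
    then show "\<exists>v. vsupp (mdim N) v \<and> vmul (mdim N) v G = w" using vsupp_vmul[OF hom_wf[OF F(1)]] by blast
  qed
  ultimately show ?thesis using G(1) by (auto simp: isomorphic_def is_mono_def is_epi_def)
qed

lemma simple_quotient_of_proj_cover_iso:
  fixes A :: "'k::field alg"
  assumes pc: "proj_cover A P S e" and S: "simple_mod A S" and M: "simple_mod A M"
    and \<phi>: "is_epi A P M \<phi>"
  shows "isomorphic A M S"
proof -
  have Sm: "is_module A S" using S by (simp add: simple_mod_def)
  have Mm: "is_module A M" and M0: "0 < mdim M" using M by (auto simp: simple_mod_def)
  have e: "is_epi A P S e" using pc by (simp add: proj_cover_def)
  have ph: "is_hom A P M \<phi>" and ps: "surj_mat (mdim P) (mdim M) \<phi>" using \<phi> by (auto simp: is_epi_def)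
  obtain \<psi> where \<psi>: "is_hom A S M \<psi>" "mmul (mdim S) e \<psi> = \<phi>"
    using hom_factors_through_epi[OF Sm Mm e ph proj_cover_kernel_killed_by_simple_quotient[OF pc M \<phi>]]
    by blast
  have "row_image (mdim P) \<phi> \<subseteq> row_image (mdim S) \<psi>"
    using vsupp_vmul[OF hom_wf[of A P S e]] e
    by (auto simp: row_image_def \<psi>(2)[symmetric] vmul_mmul[symmetric] is_epi_def)
  then have \<psi>s: "surj_mat (mdim S) (mdim M) \<psi>" using ps by (auto simp: surj_mat_iff_row_image)
  have "unitv 0 \<in> row_image (mdim S) \<psi>" "unitv 0 \<noteq> (\<lambda>_. 0 :: 'k)"
    using \<psi>s vsupp_unitv[OF M0] by (auto simp: surj_mat_iff_row_image unitv_def fun_eq_iff)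
  then have "inj_mat (mdim S) \<psi>" using hom_from_simple_inj_or_zero[OF S \<psi>(1)] by auto
  then have "isomorphic A S M" using \<psi>(1) \<psi>s by (auto simp: isomorphic_def is_mono_def is_epi_def)
  then show ?thesis by (rule isomorphic_sym[OF Sm Mm])
qed

lemma epi_mono_factorization:
  fixes A :: "'k::field alg"
  assumes M: "is_module A M" and N: "is_module A N" and f: "is_hom A M N f"
  obtains V q \<iota> where "is_module A V" "is_epi A M V q" "is_mono A V N \<iota>" "mmul (mdim V) q \<iota> = f"
proof -
  obtain V \<iota> where V: "is_module A V" "is_mono A V N \<iota>" "row_image (mdim V) \<iota> = row_image (mdim M) f"
    using image_submodule[OF M N f] by blast
  have rows: "f a \<in> row_image (mdim V) \<iota>" if "a < mdim M" for a
    unfolding V(3) mem_row_image_iff using vsupp_unitv[OF that] vmul_unitv[OF that] by blast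
  obtain q where q: "is_hom A M V q" "mmul (mdim V) q \<iota> = f"
    using hom_factors_through_mono[OF M V(1) f V(2) rows] by blast
  have "surj_mat (mdim M) (mdim V) q"
    unfolding surj_mat_def
  proof (intro allI impI)
    fix w :: "nat \<Rightarrow> 'k" assume w: "vsupp (mdim V) w"
    then have "vmul (mdim V) w \<iota> \<in> row_image (mdim M) f" unfolding V(3)[symmetric] mem_row_image_iff by blast
    then obtain x where x: "vsupp (mdim M) x" "vmul (mdim M) x f = vmul (mdim V) w \<iota>"
      unfolding mem_row_image_iff by blast
    have "vmul (mdim V) (vmul (mdim M) x q) \<iota> = vmul (mdim V) w \<iota>" using x(2) q(2) by (simp add: vmul_mmul)
    then have "vmul (mdim M) x q = w"
      using inj_mat_vmul_eqD[of "mdim V" \<iota>] V(2) vsupp_vmul[OF hom_wf[OF q(1)]] w by (auto simp: is_mono_def)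
    then show "\<exists>v. vsupp (mdim M) v \<and> vmul (mdim M) v q = w" using x(1) by blast
  qed
  with q V that show ?thesis by (simp add: is_epi_def)
qed

lemma top_in_quotient_of_cover:
  assumes pc: "proj_cover A P (S i) e" and Si: "simple_mod A (S i)" and i: "i \<in> I0"
    and q: "is_epi A P V q"
  shows "top_in A S I0 V"
  unfolding top_in_def
proof (intro allI impI)
  fix M F assume MF: "simple_mod A M \<and> is_epi A V M F"
  then have "isomorphic A M (S i)"
    using simple_quotient_of_proj_cover_iso[OF pc Si] epi_comp[OF q] by blast
  then show "\<exists>l\<in>I0. isomorphic A M (S l)" using i by blast
qed

lemma hom_from_cover_factors_through_largest_sub:
  assumes pc: "proj_cover A P (S i) e" and Si: "simple_mod A (S i)" and i: "i \<in> I0"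
    and K: "is_module A K" and g: "is_hom A P K g" and ls: "largest_sub A S I0 K U \<iota>"
  shows "\<exists>g'. is_hom A P U g' \<and> mmul (mdim U) g' \<iota> = g"
proof -
  have P: "is_module A P" using pc by (simp add: proj_cover_def projective_mod_def)
  obtain V q k where V: "is_module A V" "is_epi A P V q" "is_mono A V K k" "mmul (mdim V) q k = g"
    using epi_mono_factorization[OF P K g] by blast
  have "top_in A S I0 V" by (rule top_in_quotient_of_cover[where S = S and i = i, OF pc Si i V(2)])
  then obtain g0 where g0: "is_hom A V U g0" "mmul (mdim U) g0 \<iota> = k"
    using ls V(1,3) unfolding largest_sub_def by blast
  have "is_hom A P U (mmul (mdim V) q g0)" using V(2) g0(1) by (auto simp: is_epi_def intro: hom_comp)
  moreover have "mmul (mdim U) (mmul (mdim V) q g0) \<iota> = g" by (simp add: mmul_assoc g0(2) V(4))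
  ultimately show ?thesis by blast
qed

section \<open>Chain maps out of a stalk complex\<close>

definition homs_into_kernel :: "'k::field alg \<Rightarrow> 'k amod \<Rightarrow> 'k amod \<Rightarrow> 'k mat \<Rightarrow> 'k mat set" where
  "homs_into_kernel A P E d = {g. is_hom A P E g \<and> mmul (mdim E) g d = zmat}"

lemma lincomb_eq_sum_mscale: "(\<lambda>i j. \<Sum>l\<in>L. c l * F l i j) = (\<Sum>l\<in>L. mscale (c l) (F l))"
  by (simp add: fun_eq_iff sum_fun_apply mscale_def)

lemma dim_Hom_eq_dim_homs: "dim_Hom A M N = mat.dim {F. is_hom A M N F}"
proof -
  have "dim_Hom A M N = Max {length xs | xs. set xs \<subseteq> {F. is_hom A M N F} \<and> mat.independent_list xs}"
    unfolding dim_Hom_def mat.independent_list_def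
    by (simp only: lincomb_eq_sum_mscale zero_fun_eq_zmat subset_iff mem_Collect_eq Ball_def)
  also have "\<dots> = mat.dim {F. is_hom A M N F}"
    by (rule mat.Max_length_independent_list_eq_dim[OF _ homs_in_span_Emat]) simp
  finally show ?thesis .
qed

lemma chain_map_from_stalk:
  assumes C: "\<And>n. C n = (if n = n0 then P else zmod)" and dC: "\<And>n. dC n = zmat"
  shows "chain_map A C dC E dE f \<longleftrightarrow> f n0 \<in> homs_into_kernel A P (E n0) (dE n0) \<and> (\<forall>n. n \<noteq> n0 \<longrightarrow> f n = zmat)"
proof
  assume f: "chain_map A C dC E dE f"
  have "f n = zmat" if "n \<noteq> n0" for n
  proof -
    have "is_hom A (C n) (E n) (f n)" using f unfolding chain_map_def by blast
    then have "wf_mat 0 (mdim (E n)) (f n)" using C[of n] that hom_wf by (fastforce simp: zmod_def)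
    then show ?thesis by (rule wf_mat_0_rows)
  qed
  moreover have "f n0 \<in> homs_into_kernel A P (E n0) (dE n0)"
    using f C[of n0] dC[of n0] by (auto simp: chain_map_def homs_into_kernel_def dest: spec[of _ n0])
  ultimately show "f n0 \<in> homs_into_kernel A P (E n0) (dE n0) \<and> (\<forall>n. n \<noteq> n0 \<longrightarrow> f n = zmat)" by blast
next
  assume f: "f n0 \<in> homs_into_kernel A P (E n0) (dE n0) \<and> (\<forall>n. n \<noteq> n0 \<longrightarrow> f n = zmat)"
  show "chain_map A C dC E dE f"
    unfolding chain_map_def
  proof (intro conjI allI)
    fix n
    show "is_hom A (C n) (E n) (f n)"
      using f C[of n] by (cases "n = n0") (simp_all add: homs_into_kernel_def hom_zmat)
    show "mmul (mdim (C (n + 1))) (dC n) (f (n + 1)) = mmul (mdim (E n)) (f n) (dE n)"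
      using f by (cases "n = n0") (simp_all add: dC homs_into_kernel_def)
  qed
qed

lemma null_homotopic_zero: "null_homotopic A C dC E dE (\<lambda>n. zmat)"
  unfolding null_homotopic_def
  by (rule exI[of _ "\<lambda>n. zmat"]) (simp add: hom_zmat madd_def, simp add: zmat_def)

lemma null_homotopic_from_stalk_vanishes:
  assumes dC: "\<And>n. dC n = zmat" and E: "E (n0 - 1) = zmod"
    and "null_homotopic A C dC E dE f"
  shows "f n0 = zmat"
proof -
  obtain h where "f n0 = madd (mmul (mdim (C (n0 + 1))) (dC n0) (h (n0 + 1))) (mmul (mdim (E (n0 - 1))) (h n0) (dE (n0 - 1)))"
    using assms(3) unfolding null_homotopic_def by blast
  then show ?thesis using dC E by (simp add: madd_def zmod_def mmul_def zmat_def)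
qed

lemma null_homotopic_lincomb_from_stalk_iff:
  fixes A :: "'k::field alg" and c :: "nat \<Rightarrow> 'k"
  assumes C: "\<And>n. C n = (if n = n0 then P else zmod)" and dC: "\<And>n. dC n = zmat"
    and E: "E (n0 - 1) = zmod" and fs: "\<forall>f\<in>set fs. chain_map A C dC E dE f"
  shows "null_homotopic A C dC E dE (\<lambda>n i j. \<Sum>l<length fs. c l * (fs ! l) n i j)
      \<longleftrightarrow> (\<Sum>l<length fs. mscale (c l) ((fs ! l) n0)) = 0"
proof -
  let ?g = "\<lambda>i j. \<Sum>l<length fs. c l * (fs ! l) n0 i j"
  let ?lift = "\<lambda>G n. if n = n0 then G else zmat"
  have "(fs ! l) n = zmat" if "l < length fs" "n \<noteq> n0" for l n
    using fs nth_mem[OF that(1)] that(2) chain_map_from_stalk[where dC = dC, OF C dC] by blast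
  then have lift: "(\<lambda>n i j. \<Sum>l<length fs. c l * (fs ! l) n i j) = ?lift ?g"
    by (auto simp: fun_eq_iff zmat_def)
  have "null_homotopic A C dC E dE (?lift ?g) \<longleftrightarrow> ?g = zmat"
  proof
    assume "null_homotopic A C dC E dE (?lift ?g)"
    from null_homotopic_from_stalk_vanishes[of dC E n0, OF dC E this] show "?g = zmat" by simp
  next
    assume "?g = zmat"
    then have "?lift ?g = (\<lambda>n. zmat)" by auto
    then show "null_homotopic A C dC E dE (?lift ?g)" using null_homotopic_zero by metis
  qed
  then show ?thesis unfolding lift by (simp add: lincomb_eq_sum_mscale zero_fun_eq_zmat)
qed

lemma dim_HomK_from_stalk:
  fixes A :: "'k::field alg"
  assumes C: "\<And>n. C n = (if n = n0 then P else zmod)" and dC: "\<And>n. dC n = zmat"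
    and E: "E (n0 - 1) = zmod"
  shows "dim_HomK A C dC E dE = mat.dim (homs_into_kernel A P (E n0) (dE n0))"
proof -
  let ?Z = "homs_into_kernel A P (E n0) (dE n0)"
  let ?lift = "\<lambda>G n. if n = n0 then G else zmat"
  note chain = chain_map_from_stalk[where dC = dC, OF C dC]
  note null = null_homotopic_lincomb_from_stalk_iff[where C = C and dC = dC and E = E, OF C dC E]
  txt \<open>Chain maps from the stalk complex correspond to their component in degree n0.\<close>
  have "{length fs | fs. (\<forall>f\<in>set fs. chain_map A C dC E dE f) \<and>
     (\<forall>c :: nat \<Rightarrow> 'k. null_homotopic A C dC E dE (\<lambda>n i j. \<Sum>l<length fs. c l * (fs ! l) n i j)
        \<longrightarrow> (\<forall>l<length fs. c l = 0))} = {length xs | xs. set xs \<subseteq> ?Z \<and> mat.independent_list xs}"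
    (is "?L1 = ?L2")
  proof
    show "?L1 \<subseteq> ?L2"
    proof
      fix x assume "x \<in> ?L1"
      then obtain fs where fs: "x = length fs" "\<forall>f\<in>set fs. chain_map A C dC E dE f"
        "\<forall>c :: nat \<Rightarrow> 'k. null_homotopic A C dC E dE (\<lambda>n i j. \<Sum>l<length fs. c l * (fs ! l) n i j)
          \<longrightarrow> (\<forall>l<length fs. c l = 0)" by blast
      then show "x \<in> ?L2"
        using null[OF fs(2)] fs(2) chain
        by (intro CollectI exI[of _ "map (\<lambda>f. f n0) fs"]) (auto simp: mat.independent_list_def)
    qed
  next
    show "?L2 \<subseteq> ?L1"
    proof
      fix x assume "x \<in> ?L2"
      then obtain xs where xs: "x = length xs" "set xs \<subseteq> ?Z" "mat.independent_list xs" by blast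
      have fs: "\<forall>f\<in>set (map ?lift xs). chain_map A C dC E dE f"
      proof
        fix f assume "f \<in> set (map ?lift xs)"
        then obtain G where "G \<in> set xs" "f = ?lift G" by auto
        then show "chain_map A C dC E dE f" using xs(2) unfolding chain by auto
      qed
      show "x \<in> ?L1"
        using null[OF fs] fs xs by (intro CollectI exI[of _ "map ?lift xs"]) (auto simp: mat.independent_list_def)
    qed
  qed
  then have "dim_HomK A C dC E dE = Max ?L2" by (simp add: dim_HomK_def)
  also have "\<dots> = mat.dim ?Z"
    by (rule mat.Max_length_independent_list_eq_dim[OF _ subset_trans[OF _ homs_in_span_Emat]])
      (auto simp: homs_into_kernel_def)
  finally show ?thesis .
qed

section \<open>The modules R_j^(m)\<close>

locale R_tower_setting =
  fixes A :: "'k::field alg" and S :: "'i \<Rightarrow> 'k amod" and I0 :: "'i set" and Pj :: "'k amod"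
    and R :: "nat \<Rightarrow> 'k amod" and dR :: "nat \<Rightarrow> 'k mat" and K :: "nat \<Rightarrow> 'k amod" and \<kappa> :: "nat \<Rightarrow> 'k mat"
    and U :: "nat \<Rightarrow> 'k amod" and \<iota> :: "nat \<Rightarrow> 'k mat" and \<pi> :: "nat \<Rightarrow> 'k mat"
  assumes tower: "R_tower A S I0 Pj R dR K \<kappa> U \<iota> \<pi>" and module_Pj: "is_module A Pj"
begin

text \<open>Rpred m is R^(m-1), with R^(-1) = P_j, i.e. the term of T^(m)_j in degree -m, and dRpred m is
  the differential leaving it.\<close>

definition Rpred :: "nat \<Rightarrow> 'k amod" where
  "Rpred m = (if m = 0 then Pj else R (m - 1))"

definition dRpred :: "nat \<Rightarrow> 'k mat" where
  "dRpred m = (if m = 0 then zmat else dR (m - 1))"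

lemma tower_step:
  "(if m = 0 then K 0 = Pj \<and> \<kappa> 0 = idm (mdim Pj)
    else is_kernel A (R (m - 1)) (Rpred (m - 1)) (dR (m - 1)) (K m) (\<kappa> m)) \<and>
   largest_sub A S I0 (K m) (U m) (\<iota> m) \<and> proj_cover A (R m) (U m) (\<pi> m) \<and>
   dR m = mmul (mdim (U m)) (\<pi> m) (mmul (mdim (K m)) (\<iota> m) (\<kappa> m))"
  using tower unfolding R_tower_def Let_def Rpred_def by blast

lemma largest_sub_U: "largest_sub A S I0 (K m) (U m) (\<iota> m)"
  using tower_step by blast

lemma module_R: "is_module A (R m)" and module_U: "is_module A (U m)" and epi_\<pi>: "is_epi A (R m) (U m) (\<pi> m)"
  using tower_step[of m] by (auto simp: proj_cover_def projective_mod_def)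

lemma kernel_K: "0 < m \<Longrightarrow> is_kernel A (R (m - 1)) (Rpred (m - 1)) (dR (m - 1)) (K m) (\<kappa> m)"
  using tower_step[of m] by simp

lemma K_0: "K 0 = Pj" "\<kappa> 0 = idm (mdim Pj)"
  using tower_step[of 0] by auto

lemma module_K: "is_module A (K m)"
  using kernel_K[of m] K_0 module_Pj by (cases "m = 0") (auto simp: is_kernel_def)

lemma hom_\<kappa>: "is_hom A (K m) (Rpred m) (\<kappa> m)"
  using kernel_K[of m] K_0 hom_idm[OF module_Pj]
  by (cases "m = 0") (auto simp: is_kernel_def is_mono_def Rpred_def)

lemma dR_eq: "dR m = mmul (mdim (U m)) (\<pi> m) (mmul (mdim (K m)) (\<iota> m) (\<kappa> m))"
  using tower_step by blast

lemma hom_dR: "is_hom A (R m) (Rpred m) (dR m)"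
  unfolding dR_eq using epi_\<pi> largest_sub_U hom_\<kappa>
  by (auto simp: is_epi_def largest_sub_def is_mono_def intro!: hom_comp)

lemma dR_dRpred: "mmul (mdim (Rpred m)) (dR m) (dRpred m) = zmat"
proof (cases "m = 0")
  case False
  have "mmul (mdim (Rpred m)) (\<kappa> m) (dRpred m) = zmat"
    using kernel_K[of m] False by (simp add: is_kernel_def Rpred_def dRpred_def)
  then show ?thesis by (simp add: dR_eq mmul_assoc)
qed (simp add: dRpred_def)

lemma homs_into_kernel_factor_through_K:
  assumes P: "is_module A P" and g: "g \<in> homs_into_kernel A P (Rpred m) (dRpred m)"
  shows "\<exists>g'. is_hom A P (K m) g' \<and> mmul (mdim (K m)) g' (\<kappa> m) = g"
proof (cases "m = 0")
  case True
  then have "is_hom A P Pj g" using g by (simp add: homs_into_kernel_def Rpred_def)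
  moreover from this have "mmul (mdim Pj) g (idm (mdim Pj)) = g" by (rule mmul_idm_right[OF hom_wf])
  ultimately show ?thesis using K_0 True by auto
next
  case False
  have ker: "is_kernel A (R (m - 1)) (Rpred (m - 1)) (dR (m - 1)) (K m) (\<kappa> m)" using kernel_K False by simp
  have gh: "is_hom A P (R (m - 1)) g" and gd: "mmul (mdim (R (m - 1))) g (dR (m - 1)) = zmat"
    using g False by (auto simp: homs_into_kernel_def Rpred_def dRpred_def)
  have "g a \<in> row_image (mdim (K m)) (\<kappa> m)" if "a < mdim P" for a
  proof -
    have "vsupp (mdim (R (m - 1))) (g a)" using hom_wf[OF gh] by (rule wf_mat_row_vsupp)
    moreover have "vmul (mdim (R (m - 1))) (g a) (dR (m - 1)) = (\<lambda>_. 0)"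
      using gd mmul_row[of "mdim (R (m - 1))" g "dR (m - 1)" a] by (simp add: zmat_def)
    ultimately show ?thesis using ker unfolding is_kernel_def mem_row_image_iff by blast
  qed
  then show ?thesis
    using hom_factors_through_mono[OF P module_K gh] ker by (simp add: is_kernel_def)
qed

lemma image_compose_dR:
  assumes P: "projective_mod A P"
    and lift: "\<And>g. is_hom A P (K t) g \<Longrightarrow> \<exists>g'. is_hom A P (U t) g' \<and> mmul (mdim (U t)) g' (\<iota> t) = g"
  shows "(\<lambda>F. mmul (mdim (R t)) F (dR t)) ` {F. is_hom A P (R t) F} = homs_into_kernel A P (Rpred t) (dRpred t)"
proof
  show "(\<lambda>F. mmul (mdim (R t)) F (dR t)) ` {F. is_hom A P (R t) F} \<subseteq> homs_into_kernel A P (Rpred t) (dRpred t)"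
    using hom_comp[OF _ hom_dR] dR_dRpred by (auto simp: homs_into_kernel_def mmul_assoc)
next
  show "homs_into_kernel A P (Rpred t) (dRpred t) \<subseteq> (\<lambda>F. mmul (mdim (R t)) F (dR t)) ` {F. is_hom A P (R t) F}"
  proof
    fix g assume g: "g \<in> homs_into_kernel A P (Rpred t) (dRpred t)"
    have Pm: "is_module A P" using P by (simp add: projective_mod_def)
    obtain g' where g': "is_hom A P (K t) g'" "mmul (mdim (K t)) g' (\<kappa> t) = g"
      using homs_into_kernel_factor_through_K[OF Pm g] by blast
    obtain g'' where g'': "is_hom A P (U t) g''" "mmul (mdim (U t)) g'' (\<iota> t) = g'"
      using lift[OF g'(1)] by blast
    obtain h where h: "is_hom A P (R t) h" "mmul (mdim (R t)) h (\<pi> t) = g''"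
      using P module_R module_U epi_\<pi> g''(1) unfolding projective_mod_def by blast
    have "mmul (mdim (R t)) h (dR t) = g" by (simp add: dR_eq mmul_assoc[symmetric] h(2) g''(2) g'(2))
    then show "g \<in> (\<lambda>F. mmul (mdim (R t)) F (dR t)) ` {F. is_hom A P (R t) F}" using h(1) by force
  qed
qed

lemma dim_Hom_R_eq:
  assumes P: "projective_mod A P"
    and lift: "\<And>g. is_hom A P (K t) g \<Longrightarrow> \<exists>g'. is_hom A P (U t) g' \<and> mmul (mdim (U t)) g' (\<iota> t) = g"
  shows "dim_Hom A P (R t) = mat.dim (homs_into_kernel A P (Rpred (Suc t)) (dRpred (Suc t)))
      + mat.dim (homs_into_kernel A P (Rpred t) (dRpred t))"
proof -
  let ?X = "{F. is_hom A P (R t) F}" and ?\<Phi> = "\<lambda>F. mmul (mdim (R t)) F (dR t)"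
  have lin: "Vector_Spaces.linear mscale mscale ?\<Phi>"
    by (simp add: linear_iff mat.vector_space_axioms plus_fun_def mmul_add_left mscale_def mmul_scale_left)
  have img: "?\<Phi> ` ?X \<subseteq> mat.span (Emat ` ({..<mdim P} \<times> {..<mdim (Rpred t)}))"
    using homs_in_span_Emat hom_comp[OF _ hom_dR] by blast
  have "mat.dim ?X = mat.dim {F \<in> ?X. ?\<Phi> F = 0} + mat.dim (?\<Phi> ` ?X)"
    by (rule mat.dim_eq_dim_kernel_add_dim_image[OF lin subspace_homs _ homs_in_span_Emat _ img]) simp_all
  moreover have "{F \<in> ?X. ?\<Phi> F = 0} = homs_into_kernel A P (Rpred (Suc t)) (dRpred (Suc t))"
    by (simp add: homs_into_kernel_def Rpred_def dRpred_def zero_fun_eq_zmat)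
  ultimately show ?thesis using image_compose_dR[OF P lift] by (simp add: dim_Hom_eq_dim_homs)
qed

lemma dim_HomK_T_eq:
  "dim_HomK A (T_mods_I0 P i m) (T_diff_I0 m) (T_mods_j Pj R m) (T_diff_j dR m)
     = mat.dim (homs_into_kernel A (P i) (Rpred m) (dRpred m))"
proof -
  have "T_mods_j Pj R m (- int m) = Rpred m" "T_diff_j dR m (- int m) = dRpred m"
    by (cases "m = 0"; simp add: T_mods_j_def T_diff_j_def Rpred_def dRpred_def nat_diff_distrib')+
  moreover have "T_mods_j Pj R m (- int m - 1) = zmod" by (simp add: T_mods_j_def)
  ultimately show ?thesis
    by (simp add: dim_HomK_from_stalk T_mods_I0_def T_diff_I0_def)
qed

end

theorem mainTheorem2:
  fixes A :: "'k::field alg"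
    and I I0 :: "'i set"
    and S P :: "'i \<Rightarrow> 'k amod"
    and i j :: 'i
    and R :: "nat \<Rightarrow> 'k amod" and dR :: "nat \<Rightarrow> 'k mat"
    and K :: "nat \<Rightarrow> 'k amod" and \<kappa> :: "nat \<Rightarrow> 'k mat"
    and U :: "nat \<Rightarrow> 'k amod" and \<iota> :: "nat \<Rightarrow> 'k mat" and \<pi> :: "nat \<Rightarrow> 'k mat"
    and t :: nat
  assumes "symmetric_algebra A"
    and "simple_reps A I S"
    and "\<forall>l\<in>I. \<exists>e. proj_cover A (P l) (S l) e"
    and "I0 \<subseteq> I"
    and "i \<in> I0"
    and "j \<in> I - I0"
    and "R_tower A S I0 (P j) R dR K \<kappa> U \<iota> \<pi>"
  shows "dim_HomK A (T_mods_I0 P i t) (T_diff_I0 t) (T_mods_j (P j) R t) (T_diff_j dR t)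
       + dim_HomK A (T_mods_I0 P i (t + 1)) (T_diff_I0 (t + 1)) (T_mods_j (P j) R (t + 1)) (T_diff_j dR (t + 1))
       = dim_Hom A (P i) (R t)"
proof -
  have iI: "i \<in> I" and jI: "j \<in> I" using assms(4-6) by auto
  obtain ei where cover_i: "proj_cover A (P i) (S i) ei" using assms(3) iI by blast
  obtain ej where "proj_cover A (P j) (S j) ej" using assms(3) jI by blast
  then have "is_module A (P j)" by (simp add: proj_cover_def projective_mod_def)
  with assms(7) interpret R_tower_setting A S I0 "P j" R dR K \<kappa> U \<iota> \<pi>
    by unfold_locales
  have simple_i: "simple_mod A (S i)" using assms(2) iI by (simp add: simple_reps_def)
  have "dim_Hom A (P i) (R t) = mat.dim (homs_into_kernel A (P i) (Rpred (Suc t)) (dRpred (Suc t)))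
      + mat.dim (homs_into_kernel A (P i) (Rpred t) (dRpred t))"
  proof (rule dim_Hom_R_eq)
    show "projective_mod A (P i)" using cover_i by (simp add: proj_cover_def)
    show "\<exists>g'. is_hom A (P i) (U t) g' \<and> mmul (mdim (U t)) g' (\<iota> t) = g" if "is_hom A (P i) (K t) g" for g
      using hom_from_cover_factors_through_largest_sub[OF cover_i simple_i assms(5) module_K that largest_sub_U] .
  qed
  then show ?thesis by (simp add: dim_HomK_T_eq)
qed

end
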